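(* Let $G$ be a connected graph on $n\geq 2$ vertices and let $H$ be a blowup of $G$ with $m$ vertices. Suppose $\sigma$ is a multiset consisting of $n$ distinct real numbers and $\sigma'$ is any multiset of $m-n$ real numbers. Then $\sigma\cup\sigma'$ is the spectrum of some matrix in $\mathcal{S}(H)$.
   Context: For a simple graph $G$ on $n$ vertices, $\mathcal{S}(G)$ is the set of all $n\times n$ real symmetric matrices $A=(a_{ij})$ such that for $i\neq j$, $a_{ij}\neq 0$ if and only if $\{i,j\}$ is an edge of $G$ (diagonal entries unrestricted). For a vertex $v$ and a positive integer $k$, the $k$-duplication of $v$ replaces $v$ by $k$ mutually adjacent vertices, each adjacent to exactly the neighbours of $v$ in $G-v$. If $V(G)=\{v_1,\ldots,v_n\}$ and $m_1,\ldots,m_n$ are positive integers, the blowup of $G$ with respect to $m_1,\ldots,m_n$ is obtained by performing the $m_i$-duplication of $v_i$ for $i=1,\ldots,n$ sequentially; it has $\sum_i m_i$ vertices. *)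

theory Defs
  imports "Jordan_Normal_Form.Char_Poly" "HOL-Library.Multiset"
begin

definition simple_graph :: "nat \<Rightarrow> (nat \<Rightarrow> nat \<Rightarrow> bool) \<Rightarrow> bool" where
  "simple_graph n E \<longleftrightarrow>
     (\<forall>i j. E i j \<longrightarrow> i < n \<and> j < n \<and> i \<noteq> j \<and> E j i)"

definition connected_graph :: "nat \<Rightarrow> (nat \<Rightarrow> nat \<Rightarrow> bool) \<Rightarrow> bool" where
  "connected_graph n E \<longleftrightarrow> (\<forall>i<n. \<forall>j<n. E\<^sup>*\<^sup>* i j)"

(* H (on {0..<m}) is a blowup of G = ({0..<n},E): there is a surjection f onto
   the vertices of G whose fibres are the cliques replacing the vertices of G
   (fibre of i has size m_i \<ge> 1), and two distinct vertices of H are adjacent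
   iff they lie in the same fibre or their images are adjacent in G. *)
definition is_blowup ::
  "nat \<Rightarrow> (nat \<Rightarrow> nat \<Rightarrow> bool) \<Rightarrow> nat \<Rightarrow> (nat \<Rightarrow> nat \<Rightarrow> bool) \<Rightarrow> bool" where
  "is_blowup n E m H \<longleftrightarrow>
     (\<exists>f. f ` {0..<m} = {0..<n} \<and>
          (\<forall>u v. H u v \<longleftrightarrow> u < m \<and> v < m \<and> u \<noteq> v \<and> (f u = f v \<or> E (f u) (f v))))"

definition S_graph :: "nat \<Rightarrow> (nat \<Rightarrow> nat \<Rightarrow> bool) \<Rightarrow> real mat set" where
  "S_graph n E = {A. A \<in> carrier_mat n n \<and> transpose_mat A = A \<and>
      (\<forall>i<n. \<forall>j<n. i \<noteq> j \<longrightarrow> (A $$ (i, j) \<noteq> 0 \<longleftrightarrow> E i j))}"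

definition is_spectrum :: "real mat \<Rightarrow> real multiset \<Rightarrow> bool" where
  "is_spectrum A S \<longleftrightarrow> char_poly A = (\<Prod>a\<in>#S. [:- a, 1:])"

end

(*
  First sigma is realised on G itself.  For A = diag x + t N with N symmetric and supported on the
  edges of G, the Jacobian in x of the equations det (lambda_i - A) = 0 (i < n) at (x, t) = (lambda, 0)
  is diagonal with entries prod_{j <> i} (lambda_i - lambda_j), which are nonzero as the lambda_i are
  distinct.  Hence for small t a simplified Newton iteration contracts a small box around lambda, and
  its fixed point gives a matrix in S(G) with spectrum sigma.  For generic edge weights N no
  diagonal entry x_i can stay at lambda_i (then det (lambda_i - A) / t^2 would be close to a nonzero
  arrowhead determinant), so the diagonal avoids the finite set sigma'.

  The eigenvalues c of sigma' are then added one at a time by duplicating a vertex v of the current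
  graph: conjugating B (+) [c] by a rotation in the plane of v and the new vertex keeps the spectrum,
  gives the new vertex the neighbours of v, and joins it to v with weight proportional to B_vv - c,
  which is nonzero as the diagonal of B avoids sigma'.  All but finitely many rotation angles keep
  the two new diagonal entries outside sigma'.
*)

theory Submission
  imports Defs
begin

section \<open>Perturbation bounds for determinants\<close>

lemma abs_prod_le_power:
  fixes b :: "'a \<Rightarrow> real"
  assumes "\<And>i. i \<in> S \<Longrightarrow> \<bar>b i\<bar> \<le> K"
  shows "\<bar>prod b S\<bar> \<le> K ^ card S"
proof -
  have "\<bar>prod b S\<bar> = (\<Prod>i\<in>S. \<bar>b i\<bar>)" by (simp add: abs_prod)
  also have "\<dots> \<le> (\<Prod>i\<in>S. K)" by (rule prod_mono) (use assms in auto)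
  finally show ?thesis by simp
qed

lemma abs_prod_diff_le:
  fixes a b :: "'a \<Rightarrow> real"
  assumes "finite S" and "1 \<le> K" and "0 \<le> \<eta>"
    and "\<And>i. i \<in> S \<Longrightarrow> \<bar>a i\<bar> \<le> K \<and> \<bar>b i\<bar> \<le> K \<and> \<bar>a i - b i\<bar> \<le> \<eta>"
  shows "\<bar>prod a S - prod b S\<bar> \<le> real (card S) * K ^ card S * \<eta>"
  using assms
proof (induction S rule: finite_induct)
  case empty
  then show ?case by simp
next
  case (insert x S)
  let ?c = "card S"
  have IH: "\<bar>prod a S - prod b S\<bar> \<le> real ?c * K ^ ?c * \<eta>" using insert by auto
  have ax: "\<bar>a x\<bar> \<le> K" and dx: "\<bar>a x - b x\<bar> \<le> \<eta>" using insert by auto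
  have pb: "\<bar>prod b S\<bar> \<le> K ^ ?c" by (rule abs_prod_le_power) (use insert in auto)
  have "prod a (insert x S) - prod b (insert x S) = a x * (prod a S - prod b S) + (a x - b x) * prod b S"
    using insert by (simp add: algebra_simps)
  hence "\<bar>prod a (insert x S) - prod b (insert x S)\<bar> \<le> \<bar>a x\<bar> * \<bar>prod a S - prod b S\<bar> + \<bar>a x - b x\<bar> * \<bar>prod b S\<bar>"
    by (simp add: abs_mult[symmetric] abs_triangle_ineq)
  also have "\<dots> \<le> K * (real ?c * K ^ ?c * \<eta>) + \<eta> * K ^ ?c"
    by (intro add_mono mult_mono IH ax dx pb) (use insert.prems in auto)
  also have "\<dots> \<le> K * (real ?c * K ^ ?c * \<eta>) + \<eta> * K ^ Suc ?c"
    using insert.prems by (intro add_left_mono mult_left_mono power_increasing) auto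
  also have "\<dots> = real (Suc ?c) * K ^ Suc ?c * \<eta>" by (simp add: algebra_simps)
  finally show ?case using insert by simp
qed

lemma abs_det_diff_le:
  fixes A B :: "real mat"
  assumes A: "A \<in> carrier_mat k k" and B: "B \<in> carrier_mat k k" and K: "1 \<le> K" and \<eta>: "0 \<le> \<eta>"
    and entries: "\<And>i j. i < k \<Longrightarrow> j < k \<Longrightarrow>
      \<bar>A $$ (i,j)\<bar> \<le> K \<and> \<bar>B $$ (i,j)\<bar> \<le> K \<and> \<bar>A $$ (i,j) - B $$ (i,j)\<bar> \<le> \<eta>"
  shows "\<bar>det A - det B\<bar> \<le> fact k * real k * K ^ k * \<eta>"
proof -
  let ?P = "{p. p permutes {0..<k}}"
  let ?term = "\<lambda>C p. (\<Prod>i=0..<k. C $$ (i, p i))"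
  have "det A - det B = (\<Sum>p\<in>?P. signof p * (?term A p - ?term B p))"
    unfolding det_def'[OF A] det_def'[OF B] by (simp add: sum_subtractf algebra_simps)
  hence "\<bar>det A - det B\<bar> \<le> (\<Sum>p\<in>?P. \<bar>signof p * (?term A p - ?term B p)\<bar>)"
    by (simp add: sum_abs)
  also have "\<dots> \<le> (\<Sum>p\<in>?P. real k * K ^ k * \<eta>)"
  proof (rule sum_mono)
    fix p assume "p \<in> ?P"
    hence "\<bar>?term A p - ?term B p\<bar> \<le> real (card {0..<k}) * K ^ card {0..<k} * \<eta>"
      by (intro abs_prod_diff_le K \<eta> entries) (auto simp: permutes_in_image)
    moreover have "\<bar>signof p\<bar> = (1::real)" by (simp add: sign_def)
    ultimately show "\<bar>signof p * (?term A p - ?term B p)\<bar> \<le> real k * K ^ k * \<eta>"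
      by (simp add: abs_mult)
  qed
  also have "\<dots> = fact k * real k * K ^ k * \<eta>"
    by (simp add: card_permutations finite_permutations)
  finally show ?thesis .
qed

lemma det_diagonal_mat:
  fixes A :: "'a :: comm_ring_1 mat"
  assumes A: "A \<in> carrier_mat k k" and diag: "\<And>a b. a < k \<Longrightarrow> b < k \<Longrightarrow> a \<noteq> b \<Longrightarrow> A $$ (a,b) = 0"
  shows "det A = (\<Prod>a<k. A $$ (a,a))"
proof -
  have "upper_triangular A" using A diag unfolding upper_triangular_def by auto
  hence "det A = prod_list (diag_mat A)" by (rule det_upper_triangular[OF _ A])
  also have "\<dots> = (\<Prod>a<k. A $$ (a,a))" using A
    by (simp add: diag_mat_def prod.distinct_set_conv_list[symmetric] atLeast0LessThan)
  finally show ?thesis .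
qed

lemma index_mat_delete:
  "a < dim_row A - 1 \<Longrightarrow> b < dim_col A - 1 \<Longrightarrow>
   mat_delete A i j $$ (a,b) = A $$ (insert_index i a, insert_index j b)"
  unfolding mat_delete_def insert_index_def by simp

lemma abs_det_minor_diff_le:
  fixes A B :: "real mat"
  assumes A: "A \<in> carrier_mat n n" and B: "B \<in> carrier_mat n n" and K: "1 \<le> K" and \<eta>: "0 \<le> \<eta>"
    and entries: "\<And>a b. a < n \<Longrightarrow> b < n \<Longrightarrow>
      \<bar>A $$ (a,b)\<bar> \<le> K \<and> \<bar>B $$ (a,b)\<bar> \<le> K \<and> \<bar>A $$ (a,b) - B $$ (a,b)\<bar> \<le> \<eta>"
  shows "\<bar>det (mat_delete A j j) - det (mat_delete B j j)\<bar> \<le> fact n * real n * K ^ n * \<eta>"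
proof -
  have "\<bar>det (mat_delete A j j) - det (mat_delete B j j)\<bar> \<le> fact (n-1) * real (n-1) * K ^ (n-1) * \<eta>"
  proof (rule abs_det_diff_le[OF mat_delete_carrier[OF A] mat_delete_carrier[OF B] K \<eta>])
    fix a b assume "a < n - 1" "b < n - 1"
    moreover from this have "insert_index j a < n" "insert_index j b < n"
      by (auto simp: insert_index_def)
    ultimately show "\<bar>mat_delete A j j $$ (a,b)\<bar> \<le> K \<and> \<bar>mat_delete B j j $$ (a,b)\<bar> \<le> K \<and>
        \<bar>mat_delete A j j $$ (a,b) - mat_delete B j j $$ (a,b)\<bar> \<le> \<eta>"
      using A B entries by (simp add: index_mat_delete)
  qed
  also have "\<dots> \<le> fact n * real n * K ^ n * \<eta>"
    using K \<eta> by (intro mult_right_mono mult_mono fact_mono power_increasing) auto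
  finally show ?thesis .
qed

section \<open>The matrices \<open>\<mu> I - (diag x + t N)\<close>\<close>

definition shift_mat :: "nat \<Rightarrow> (nat \<Rightarrow> nat \<Rightarrow> real) \<Rightarrow> real \<Rightarrow> (nat \<Rightarrow> real) \<Rightarrow> real \<Rightarrow> real mat" where
  "shift_mat n N \<mu> x t = mat n n (\<lambda>(a,b). if a = b then \<mu> - x a else - (t * N a b))"

lemma shift_mat_carrier [simp]: "shift_mat n N \<mu> x t \<in> carrier_mat n n"
  and dim_shift_mat [simp]: "dim_row (shift_mat n N \<mu> x t) = n" "dim_col (shift_mat n N \<mu> x t) = n"
  by (simp_all add: shift_mat_def)

lemma index_shift_mat [simp]:
  "a < n \<Longrightarrow> b < n \<Longrightarrow> shift_mat n N \<mu> x t $$ (a,b) = (if a = b then \<mu> - x a else - (t * N a b))"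
  by (simp add: shift_mat_def)

lemma poly_char_poly_eq_det_shift_mat:
  "poly (char_poly (mat n n (\<lambda>(a,b). if a = b then x a else t * N a b))) \<mu> = det (shift_mat n N \<mu> x t)"
proof -
  have "- char_matrix (mat n n (\<lambda>(a,b). if a = b then x a else t * N a b)) \<mu> = shift_mat n N \<mu> x t"
    by (rule eq_matI) (auto simp: char_matrix_def)
  thus ?thesis by (subst char_poly_matrix[of _ n]) auto
qed

lemma shift_mat_cong: "(\<And>a. a < n \<Longrightarrow> x a = y a) \<Longrightarrow> shift_mat n N \<mu> x t = shift_mat n N \<mu> y t"
  by (rule eq_matI) auto

lemma mat_delete_shift_mat_upd:
  assumes "j < n"
  shows "mat_delete (shift_mat n N \<mu> (x(j := \<alpha>)) t) j l = mat_delete (shift_mat n N \<mu> x t) j l"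
proof (rule eq_matI)
  fix a b assume "a < dim_row (mat_delete (shift_mat n N \<mu> x t) j l)"
    and "b < dim_col (mat_delete (shift_mat n N \<mu> x t) j l)"
  moreover from this have "insert_index j a < n" "insert_index j a \<noteq> j" "insert_index l b < n"
    using assms by (auto simp: insert_index_def)
  ultimately show "mat_delete (shift_mat n N \<mu> (x(j := \<alpha>)) t) j l $$ (a, b) =
      mat_delete (shift_mat n N \<mu> x t) j l $$ (a, b)"
    by (simp add: index_mat_delete)
qed auto

lemma det_shift_mat_upd_diff:
  assumes j: "j < n"
  shows "det (shift_mat n N \<mu> (x(j := \<alpha>)) t) - det (shift_mat n N \<mu> (x(j := \<beta>)) t)
       = (\<beta> - \<alpha>) * det (mat_delete (shift_mat n N \<mu> x t) j j)"
proof -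
  let ?A = "shift_mat n N \<mu> (x(j := \<alpha>)) t" and ?B = "shift_mat n N \<mu> (x(j := \<beta>)) t"
  have cof: "cofactor ?A j l = cofactor ?B j l" for l
    unfolding cofactor_def mat_delete_shift_mat_upd[OF j] ..
  have "det ?A - det ?B = (\<Sum>l<n. (?A $$ (j,l) - ?B $$ (j,l)) * cofactor ?A j l)"
    unfolding laplace_expansion_row[OF shift_mat_carrier j, of N \<mu> "x(j := \<alpha>)" t]
      laplace_expansion_row[OF shift_mat_carrier j, of N \<mu> "x(j := \<beta>)" t]
    by (simp add: cof sum_subtractf algebra_simps)
  also have "\<dots> = (\<Sum>l<n. if l = j then (\<beta> - \<alpha>) * cofactor ?A j j else 0)"
    by (rule sum.cong) (auto simp: j)
  also have "\<dots> = (\<beta> - \<alpha>) * det (mat_delete (shift_mat n N \<mu> x t) j j)"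
    using j unfolding cofactor_def mat_delete_shift_mat_upd[OF j]
    by (simp add: power_add[symmetric] mult_2[symmetric])
  finally show ?thesis .
qed

lemma det_shift_mat_diff:
  "det (shift_mat n N \<mu> x t) - det (shift_mat n N \<mu> y t)
   = (\<Sum>j<n. (y j - x j) * det (mat_delete (shift_mat n N \<mu> (\<lambda>a. if a < j then x a else y a) t) j j))"
proof -
  define z where "z j = (\<lambda>a. if a < j then x a else y a)" for j
  have "det (shift_mat n N \<mu> x t) - det (shift_mat n N \<mu> y t)
      = det (shift_mat n N \<mu> (z n) t) - det (shift_mat n N \<mu> (z 0) t)"
    using shift_mat_cong[of n x "z n"] by (simp add: z_def)
  also have "\<dots> = (\<Sum>j<n. det (shift_mat n N \<mu> (z (Suc j)) t) - det (shift_mat n N \<mu> (z j) t))"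
    by (rule sum_lessThan_telescope[symmetric])
  also have "\<dots> = (\<Sum>j<n. (y j - x j) * det (mat_delete (shift_mat n N \<mu> (z j) t) j j))"
  proof (rule sum.cong)
    fix j assume "j \<in> {..<n}"
    moreover have "z (Suc j) = (z j)(j := x j)" and "z j = (z j)(j := y j)"
      by (auto simp: z_def)
    ultimately show "det (shift_mat n N \<mu> (z (Suc j)) t) - det (shift_mat n N \<mu> (z j) t)
        = (y j - x j) * det (mat_delete (shift_mat n N \<mu> (z j) t) j j)"
      using det_shift_mat_upd_diff[of j n N \<mu> "z j" "x j" t "y j"] by simp
  qed simp
  finally show ?thesis by (simp add: z_def)
qed

text \<open>The matrix \<open>shift_mat\<close> with row and column \<open>i\<close> divided by \<open>t\<close>, when its entry
  \<open>(i, i)\<close> vanishes.\<close>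

definition rescaled_shift_mat ::
  "nat \<Rightarrow> (nat \<Rightarrow> nat \<Rightarrow> real) \<Rightarrow> real \<Rightarrow> nat \<Rightarrow> (nat \<Rightarrow> real) \<Rightarrow> real \<Rightarrow> real mat" where
  "rescaled_shift_mat n N \<mu> i x t = mat n n (\<lambda>(a,b).
     if a = i \<and> b = i then 0 else if a = i then - N i b else if b = i then - N a i
     else if a = b then \<mu> - x a else - (t * N a b))"

lemma rescaled_shift_mat_carrier [simp]: "rescaled_shift_mat n N \<mu> i x t \<in> carrier_mat n n"
  and dim_rescaled_shift_mat [simp]:
    "dim_row (rescaled_shift_mat n N \<mu> i x t) = n" "dim_col (rescaled_shift_mat n N \<mu> i x t) = n"
  by (simp_all add: rescaled_shift_mat_def)

lemma index_rescaled_shift_mat [simp]: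
  "a < n \<Longrightarrow> b < n \<Longrightarrow> rescaled_shift_mat n N \<mu> i x t $$ (a,b) =
     (if a = i \<and> b = i then 0 else if a = i then - N i b else if b = i then - N a i
      else if a = b then \<mu> - x a else - (t * N a b))"
  by (simp add: rescaled_shift_mat_def)

lemma det_shift_mat_rescaled:
  assumes i: "i < n" and "x i = \<mu>"
  shows "det (shift_mat n N \<mu> x t) = t^2 * det (rescaled_shift_mat n N \<mu> i x t)"
proof -
  let ?Z = "rescaled_shift_mat n N \<mu> i x t"
  have c1: "transpose_mat ?Z \<in> carrier_mat n n"
    and c2: "multrow i t (transpose_mat ?Z) \<in> carrier_mat n n"
    and c3: "transpose_mat (multrow i t (transpose_mat ?Z)) \<in> carrier_mat n n"
    by simp_all
  have "shift_mat n N \<mu> x t = multrow i t (transpose_mat (multrow i t (transpose_mat ?Z)))"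
    by (rule eq_matI) (auto simp: assms)
  moreover have "det (multrow i t (transpose_mat (multrow i t (transpose_mat ?Z)))) = t * (t * det ?Z)"
    unfolding det_multrow[OF i c3] det_transpose[OF c2] det_multrow[OF i c1]
      det_transpose[OF rescaled_shift_mat_carrier] ..
  ultimately show ?thesis by (simp add: power2_eq_square)
qed

section \<open>Contractions of a sup-norm ball\<close>

lemma convergent_if_geometric_tail:
  fixes u :: "nat \<Rightarrow> real"
  assumes tail: "\<And>k l. \<bar>u (k + l) - u k\<bar> \<le> C * (1/2)^k"
  shows "convergent u"
proof -
  have "Cauchy u"
  proof (rule metric_CauchyI)
    fix e :: real assume "0 < e"
    have "(\<lambda>k. C * (1/2::real)^k) \<longlonglongrightarrow> 0"
      by (intro tendsto_mult_right_zero LIMSEQ_power_zero) auto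
    then obtain M where M: "\<bar>C * (1/2::real)^M\<bar> < e/2"
      using LIMSEQ_D[of _ 0 "e/2"] \<open>0 < e\<close> by fastforce
    show "\<exists>M. \<forall>m\<ge>M. \<forall>k\<ge>M. dist (u m) (u k) < e"
    proof (intro exI allI impI)
      fix m k assume "m \<ge> M" "k \<ge> M"
      moreover have "\<bar>u (M + (m - M)) - u M\<bar> \<le> C * (1/2)^M" "\<bar>u (M + (k - M)) - u M\<bar> \<le> C * (1/2)^M"
        by (rule tail)+
      ultimately show "dist (u m) (u k) < e"
        using M unfolding dist_real_def by simp
    qed
  qed
  thus ?thesis by (simp add: Cauchy_convergent_iff)
qed

definition sup_ball :: "nat \<Rightarrow> (nat \<Rightarrow> real) \<Rightarrow> real \<Rightarrow> (nat \<Rightarrow> real) set" where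
  "sup_ball n z \<delta> = {x. \<forall>a<n. \<bar>x a - z a\<bar> \<le> \<delta>}"

lemma le_if_le_plus_geometric:
  fixes r d C :: real
  assumes "\<And>k. r \<le> d + C * (1/2)^k" shows "r \<le> d"
proof -
  have "(\<lambda>k. d + C * (1/2::real)^k) \<longlonglongrightarrow> d + C * 0" by (intro tendsto_intros) simp
  thus ?thesis using assms by (intro LIMSEQ_le_const[where X = "\<lambda>k. d + C * (1/2)^k"]) auto
qed

locale sup_ball_contraction =
  fixes F :: "(nat \<Rightarrow> real) \<Rightarrow> nat \<Rightarrow> real" and n :: nat and z :: "nat \<Rightarrow> real" and \<delta> :: real
  assumes maps: "\<And>x. x \<in> sup_ball n z \<delta> \<Longrightarrow> F x \<in> sup_ball n z \<delta>"
    and contracts: "\<And>x y \<rho> a. x \<in> sup_ball n z \<delta> \<Longrightarrow> y \<in> sup_ball n z \<delta> \<Longrightarrow>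
        \<forall>a<n. \<bar>x a - y a\<bar> \<le> \<rho> \<Longrightarrow> a < n \<Longrightarrow> \<bar>F x a - F y a\<bar> \<le> \<rho> / 2"
    and radius_nonneg: "0 \<le> \<delta>"
begin

lemma iterate_in_sup_ball: "(F ^^ k) z \<in> sup_ball n z \<delta>"
  by (induction k) (use radius_nonneg maps in \<open>auto simp: sup_ball_def\<close>)

lemma iterates_tail: "\<forall>a<n. \<forall>l. \<bar>(F ^^ (k + l)) z a - (F ^^ k) z a\<bar> \<le> 2 * \<delta> * (1/2)^k"
proof (induction k)
  case 0
  show ?case
  proof (intro allI impI)
    fix a l assume "a < n"
    with iterate_in_sup_ball[of l] iterate_in_sup_ball[of 0]
    have "\<bar>(F ^^ l) z a - z a\<bar> \<le> \<delta>" "\<bar>(F ^^ 0) z a - z a\<bar> \<le> \<delta>"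
      unfolding sup_ball_def by auto
    thus "\<bar>(F ^^ (0 + l)) z a - (F ^^ 0) z a\<bar> \<le> 2 * \<delta> * (1/2)^0" by simp
  qed
next
  case (Suc k)
  show ?case
  proof (intro allI impI)
    fix a l assume "a < n"
    have "\<bar>F ((F ^^ (k + l)) z) a - F ((F ^^ k) z) a\<bar> \<le> 2 * \<delta> * (1/2)^k / 2"
      by (rule contracts[OF iterate_in_sup_ball iterate_in_sup_ball]) (use Suc \<open>a < n\<close> in auto)
    thus "\<bar>(F ^^ (Suc k + l)) z a - (F ^^ Suc k) z a\<bar> \<le> 2 * \<delta> * (1/2)^Suc k" by simp
  qed
qed

lemma iterates_limit:
  obtains X where "\<And>a k. a < n \<Longrightarrow> \<bar>X a - (F ^^ k) z a\<bar> \<le> 2 * \<delta> * (1/2)^k"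
proof -
  define X where "X a = lim (\<lambda>k. (F ^^ k) z a)" for a
  have "\<bar>X a - (F ^^ k) z a\<bar> \<le> 2 * \<delta> * (1/2)^k" if "a < n" for a k
  proof -
    have tail: "\<bar>(F ^^ (k + l)) z a - (F ^^ k) z a\<bar> \<le> 2 * \<delta> * (1/2)^k" for k l
      using iterates_tail[of k] that by blast
    hence "(\<lambda>k. (F ^^ k) z a) \<longlonglongrightarrow> X a"
      unfolding X_def by (intro convergent_LIMSEQ_iff[THEN iffD1] convergent_if_geometric_tail)
    hence "(\<lambda>l. \<bar>(F ^^ (k + l)) z a - (F ^^ k) z a\<bar>) \<longlonglongrightarrow> \<bar>X a - (F ^^ k) z a\<bar>"
      using LIMSEQ_ignore_initial_segment[of _ "X a" k] by (intro tendsto_intros) (simp add: add.commute)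
    thus ?thesis by (rule LIMSEQ_le_const2) (use tail in blast)
  qed
  thus ?thesis by (rule that)
qed

lemma fixpoint_exists: "\<exists>X\<in>sup_ball n z \<delta>. \<forall>a<n. F X a = X a"
proof -
  obtain X where X: "\<And>a k. a < n \<Longrightarrow> \<bar>X a - (F ^^ k) z a\<bar> \<le> 2 * \<delta> * (1/2)^k"
    using iterates_limit by blast
  have "X \<in> sup_ball n z \<delta>"
    unfolding sup_ball_def
  proof (intro CollectI allI impI)
    fix a assume a: "a < n"
    have "\<bar>X a - z a\<bar> \<le> \<delta> + 2 * \<delta> * (1/2)^k" for k
      using X[OF a, of k] iterate_in_sup_ball[of k] a unfolding sup_ball_def by force
    thus "\<bar>X a - z a\<bar> \<le> \<delta>" by (rule le_if_le_plus_geometric)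
  qed
  moreover have "F X a = X a" if a: "a < n" for a
  proof -
    have "\<bar>F X a - X a\<bar> \<le> 0 + 2 * \<delta> * (1/2)^k" for k
    proof -
      have "\<bar>F X a - F ((F ^^ k) z) a\<bar> \<le> 2 * \<delta> * (1/2)^k / 2"
        using X \<open>X \<in> sup_ball n z \<delta>\<close> iterate_in_sup_ball a by (intro contracts) auto
      moreover have "\<bar>X a - F ((F ^^ k) z) a\<bar> \<le> 2 * \<delta> * (1/2)^Suc k" using X[OF a, of "Suc k"] by simp
      ultimately show ?thesis by simp
    qed
    hence "\<bar>F X a - X a\<bar> \<le> 0" by (rule le_if_le_plus_geometric)
    thus ?thesis by simp
  qed
  ultimately show ?thesis by blast
qed

end

section \<open>Prescribing distinct eigenvalues on a graph\<close>

lemma eventually_at_right_0_mult_less: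
  fixes C D :: real
  assumes "0 < D" shows "\<forall>\<^sub>F \<delta> in at_right 0. \<delta> * C < D"
proof -
  have "((\<lambda>\<delta>. \<delta> * C) \<longlongrightarrow> 0 * C) (at_right 0)" by (intro tendsto_intros)
  thus ?thesis using assms by (intro order_tendstoD(2)) auto
qed

lemma exists_at_right_0:
  fixes P :: "real \<Rightarrow> bool"
  assumes "\<forall>\<^sub>F \<delta> in at_right 0. P \<delta>" shows "\<exists>\<delta>>0. P \<delta>"
  using eventually_happens'[OF trivial_limit_at_right_real eventually_conj[OF eventually_at_right_less assms]]
  by blast

lemma abs_le_double_sum:
  fixes f :: "nat \<Rightarrow> nat \<Rightarrow> real"
  assumes "a < n" "b < n" shows "\<bar>f a b\<bar> \<le> (\<Sum>a<n. \<Sum>b<n. \<bar>f a b\<bar>)"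
proof -
  have "\<bar>f a b\<bar> \<le> (\<Sum>b<n. \<bar>f a b\<bar>)"
    by (rule member_le_sum) (use assms in auto)
  also have "\<dots> \<le> (\<Sum>a<n. \<Sum>b<n. \<bar>f a b\<bar>)"
    by (rule member_le_sum[where f = "\<lambda>a. \<Sum>b<n. \<bar>f a b\<bar>"]) (use assms in \<open>auto intro: sum_nonneg\<close>)
  finally show ?thesis .
qed

locale eigenvalue_perturbation =
  fixes n :: nat and lam :: "nat \<Rightarrow> real" and N :: "nat \<Rightarrow> nat \<Rightarrow> real" and K0 :: real
  assumes lam_distinct: "\<And>i j. i < n \<Longrightarrow> j < n \<Longrightarrow> i \<noteq> j \<Longrightarrow> lam i \<noteq> lam j"
    and N_bound: "\<And>a b. \<bar>N a b\<bar> \<le> K0"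
begin

abbreviation M :: "nat \<Rightarrow> (nat \<Rightarrow> real) \<Rightarrow> real \<Rightarrow> real mat" where
  "M i x t \<equiv> shift_mat n N (lam i) x t"

abbreviation Z :: "nat \<Rightarrow> (nat \<Rightarrow> real) \<Rightarrow> real \<Rightarrow> real mat" where
  "Z i x t \<equiv> rescaled_shift_mat n N (lam i) i x t"

definition c :: "nat \<Rightarrow> real" where
  "c i = det (mat_delete (M i lam 0) i i)"

text \<open>\<open>K\<close> bounds the entries of all matrices \<open>M i x t\<close> and \<open>Z i x t\<close> considered below, so that
  \<open>L\<close> bounds the variation of their determinants and principal minors (\<open>abs_det_diff_le\<close>).\<close>

definition K :: real where
  "K = (\<Sum>a<n. \<Sum>b<n. \<bar>lam a - lam b\<bar>) + 1 + K0"

definition L :: real where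
  "L = fact n * real n * K ^ n"

abbreviation box :: "real \<Rightarrow> (nat \<Rightarrow> real) set" where
  "box \<delta> \<equiv> sup_ball n lam \<delta>"

text \<open>A simplified Newton iteration for the equations \<open>det (M i x t) = 0\<close>, \<open>i < n\<close>: by
  \<open>det_shift_mat_diff\<close> their Jacobian in \<open>x\<close> at \<open>(lam, 0)\<close> is \<open>- diag c\<close>, since the other
  principal minors of the diagonal matrix \<open>M i lam 0\<close> contain its zero entry.\<close>

definition newton_step :: "real \<Rightarrow> (nat \<Rightarrow> real) \<Rightarrow> nat \<Rightarrow> real" where
  "newton_step t x = (\<lambda>i. x i + det (M i x t) / c i)"

lemma K0_nonneg: "0 \<le> K0"
  using N_bound[of 0 0] by simp

lemma lam_diff_le_K: "a < n \<Longrightarrow> b < n \<Longrightarrow> \<bar>lam a - lam b\<bar> + 1 + K0 \<le> K"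
  using abs_le_double_sum[of a n b "\<lambda>a b. lam a - lam b"] unfolding K_def by simp

lemma K_ge_1: "1 \<le> K"
  unfolding K_def using K0_nonneg by (simp add: sum_nonneg)

lemma lam_in_box: "0 \<le> \<delta> \<Longrightarrow> lam \<in> box \<delta>"
  unfolding sup_ball_def by auto

lemma piecewise_in_box: "x \<in> box \<delta> \<Longrightarrow> y \<in> box \<delta> \<Longrightarrow> (\<lambda>a. if a < j then x a else y a) \<in> box \<delta>"
  unfolding sup_ball_def by auto

lemma abs_mult_N_le: "\<bar>t * N a b\<bar> \<le> \<bar>t\<bar> * K0"
  by (simp add: abs_mult mult_left_mono N_bound)

lemma det_minor_M0:
  assumes "j < n" shows "det (mat_delete (M i lam 0) j j) = (\<Prod>a<n-1. lam i - lam (insert_index j a))"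
proof -
  have "insert_index j a < n" if "a < n - 1" for a
    using that assms by (auto simp: insert_index_def)
  thus ?thesis
    by (subst det_diagonal_mat[OF mat_delete_carrier[OF shift_mat_carrier]])
       (auto simp: index_mat_delete insert_index_def intro!: prod.cong)
qed

lemma c_nonzero:
  assumes i: "i < n" shows "c i \<noteq> 0"
proof -
  have "lam i - lam (insert_index i a) \<noteq> 0" if "a < n - 1" for a
  proof -
    have "insert_index i a < n" "i \<noteq> insert_index i a" using that by (auto simp: insert_index_def)
    from lam_distinct[OF i this] show ?thesis by simp
  qed
  thus ?thesis unfolding c_def det_minor_M0[OF i] by (simp add: prod_zero_iff)
qed

lemma det_minor_M0_off_diagonal:
  assumes "i < n" "j < n" "j \<noteq> i" shows "det (mat_delete (M i lam 0) j j) = 0"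
proof -
  let ?a = "if i < j then i else i - 1"
  have "?a < n - 1" "insert_index j ?a = i" using assms by (auto simp: insert_index_def)
  thus ?thesis unfolding det_minor_M0[OF \<open>j < n\<close>] prod_zero_iff[OF finite_lessThan]
    by (intro bexI[of _ ?a]) auto
qed

lemma det_M0: "i < n \<Longrightarrow> det (M i lam 0) = 0"
  by (subst det_diagonal_mat[OF shift_mat_carrier]) (auto simp: prod_zero_iff)

lemma M_entries_close:
  assumes "i < n" "x \<in> box \<delta>" "\<delta> \<le> 1" "\<bar>t\<bar> \<le> 1" "a < n" "b < n"
  shows "\<bar>M i lam 0 $$ (a,b)\<bar> \<le> K \<and> \<bar>M i x t $$ (a,b)\<bar> \<le> K \<and>
    \<bar>M i lam 0 $$ (a,b) - M i x t $$ (a,b)\<bar> \<le> \<delta> + \<bar>t\<bar> * K0"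
proof -
  have "\<bar>x a - lam a\<bar> \<le> \<delta>" using assms unfolding sup_ball_def by auto
  moreover have "\<bar>t\<bar> * K0 \<le> K0" using assms K0_nonneg by (simp add: mult_left_le_one_le)
  ultimately show ?thesis
    using assms abs_mult_N_le[of t a b] lam_diff_le_K[of i a] K0_nonneg by (auto simp: abs_le_iff)
qed

lemma Z_entries_close:
  assumes "i < n" "x \<in> box \<delta>" "\<delta> \<le> 1" "\<bar>t\<bar> \<le> 1" "a < n" "b < n"
  shows "\<bar>Z i lam 0 $$ (a,b)\<bar> \<le> K \<and> \<bar>Z i x t $$ (a,b)\<bar> \<le> K \<and>
    \<bar>Z i lam 0 $$ (a,b) - Z i x t $$ (a,b)\<bar> \<le> \<delta> + \<bar>t\<bar> * K0"
proof -
  have "\<bar>x a - lam a\<bar> \<le> \<delta>" using assms unfolding sup_ball_def by auto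
  moreover have "\<bar>t\<bar> * K0 \<le> K0" using assms K0_nonneg by (simp add: mult_left_le_one_le)
  ultimately show ?thesis
    using assms abs_mult_N_le[of t a b] lam_diff_le_K[of i a] K0_nonneg N_bound[of i b] N_bound[of a i]
    by (auto simp: abs_le_iff)
qed

lemma minor_M_close:
  assumes "i < n" "x \<in> box \<delta>" "\<delta> \<le> 1" "\<bar>t\<bar> \<le> 1" "0 \<le> \<delta>"
  shows "\<bar>det (mat_delete (M i lam 0) j j) - det (mat_delete (M i x t) j j)\<bar> \<le> L * (\<delta> + \<bar>t\<bar> * K0)"
  unfolding L_def mult.assoc[symmetric]
  by (rule abs_det_minor_diff_le[OF shift_mat_carrier shift_mat_carrier K_ge_1 _ M_entries_close])
     (use assms K0_nonneg in auto)

lemma newton_step_contracts: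
  assumes x: "x \<in> box \<delta>" and y: "y \<in> box \<delta>" and \<delta>: "0 \<le> \<delta>" "\<delta> \<le> 1" and t: "\<bar>t\<bar> \<le> 1"
    and i: "i < n" and small: "real n * L * (\<delta> + \<bar>t\<bar> * K0) \<le> \<bar>c i\<bar> / 2"
    and \<rho>: "\<forall>a<n. \<bar>x a - y a\<bar> \<le> \<rho>"
  shows "\<bar>newton_step t x i - newton_step t y i\<bar> \<le> \<rho> / 2"
proof -
  let ?Dmix = "\<lambda>j. det (mat_delete (M i (\<lambda>a. if a < j then x a else y a) t) j j)"
  let ?Dlam = "\<lambda>j. det (mat_delete (M i lam 0) j j)"
  let ?e = "L * (\<delta> + \<bar>t\<bar> * K0)"
  have ci: "c i \<noteq> 0" by (rule c_nonzero[OF i])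
  have "0 \<le> \<rho>" using \<rho> i by force
  have "x i - y i = (\<Sum>j<n. (x j - y j) * ?Dlam j / c i)"
  proof -
    have "(\<Sum>j<n. (x j - y j) * ?Dlam j / c i) = (\<Sum>j<n. if j = i then x i - y i else 0)"
    proof (rule sum.cong)
      fix j assume "j \<in> {..<n}"
      thus "(x j - y j) * ?Dlam j / c i = (if j = i then x i - y i else 0)"
        using ci i det_minor_M0_off_diagonal[of i j] by (cases "j = i") (auto simp: c_def)
    qed simp
    thus ?thesis using i by simp
  qed
  hence "newton_step t x i - newton_step t y i
      = (\<Sum>j<n. (x j - y j) * ?Dlam j / c i) + (\<Sum>j<n. (y j - x j) * ?Dmix j) / c i"
    unfolding newton_step_def det_shift_mat_diff[symmetric] by (simp add: diff_divide_distrib)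
  also have "\<dots> = (\<Sum>j<n. (x j - y j) * ((?Dlam j - ?Dmix j) / c i))"
    unfolding sum_divide_distrib sum.distrib[symmetric] by (rule sum.cong) (use ci in \<open>auto simp: field_simps\<close>)
  finally have eq: "newton_step t x i - newton_step t y i = (\<Sum>j<n. (x j - y j) * ((?Dlam j - ?Dmix j) / c i))" .
  have "\<bar>\<Sum>j<n. (x j - y j) * ((?Dlam j - ?Dmix j) / c i)\<bar> \<le> (\<Sum>j<n. \<rho> * (?e / \<bar>c i\<bar>))"
  proof (rule order_trans[OF sum_abs sum_mono])
    fix j assume "j \<in> {..<n}"
    have "\<bar>?Dlam j - ?Dmix j\<bar> \<le> ?e"
      by (rule minor_M_close[OF i piecewise_in_box[OF x y] \<delta>(2) t \<delta>(1)])
    hence "\<bar>(?Dlam j - ?Dmix j) / c i\<bar> \<le> ?e / \<bar>c i\<bar>"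
      unfolding abs_divide by (rule divide_right_mono) simp
    thus "\<bar>(x j - y j) * ((?Dlam j - ?Dmix j) / c i)\<bar> \<le> \<rho> * (?e / \<bar>c i\<bar>)"
      unfolding abs_mult using \<rho> \<open>j \<in> {..<n}\<close> \<open>0 \<le> \<rho>\<close> by (intro mult_mono) auto
  qed
  also have "\<dots> = \<rho> * (real n * ?e / \<bar>c i\<bar>)" by simp
  also have "\<dots> \<le> \<rho> * (1/2)"
  proof (rule mult_left_mono[OF _ \<open>0 \<le> \<rho>\<close>])
    have "0 < \<bar>c i\<bar>" using ci by simp
    thus "real n * ?e / \<bar>c i\<bar> \<le> 1/2" using small by (simp add: pos_divide_le_eq mult.assoc)
  qed
  finally show ?thesis unfolding eq by simp
qed

lemma newton_step_maps_box:
  assumes x: "x \<in> box \<delta>" and \<delta>: "0 \<le> \<delta>" "\<delta> \<le> 1" and t: "\<bar>t\<bar> \<le> 1"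
    and small: "\<And>i. i < n \<Longrightarrow> real n * L * (\<delta> + \<bar>t\<bar> * K0) \<le> \<bar>c i\<bar> / 2"
    and small_t: "\<And>i. i < n \<Longrightarrow> L * (\<bar>t\<bar> * K0) \<le> \<bar>c i\<bar> * \<delta> / 2"
  shows "newton_step t x \<in> box \<delta>"
  unfolding sup_ball_def
proof (intro CollectI allI impI)
  fix i assume i: "i < n"
  have "\<bar>newton_step t x i - newton_step t lam i\<bar> \<le> \<delta> / 2"
    by (rule newton_step_contracts[OF x lam_in_box \<delta> t i small[OF i]]) (use x \<delta> in \<open>auto simp: sup_ball_def\<close>)
  moreover have "\<bar>det (M i lam t)\<bar> \<le> \<bar>c i\<bar> * \<delta> / 2"
  proof -
    have "\<bar>det (M i lam 0) - det (M i lam t)\<bar> \<le> fact n * real n * K ^ n * (0 + \<bar>t\<bar> * K0)"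
      by (rule abs_det_diff_le[OF shift_mat_carrier shift_mat_carrier K_ge_1 _ M_entries_close])
         (use i t K0_nonneg lam_in_box in auto)
    thus ?thesis using small_t[OF i] unfolding det_M0[OF i] L_def by simp
  qed
  hence "\<bar>newton_step t lam i - lam i\<bar> \<le> \<delta> / 2"
    using c_nonzero[OF i] by (simp add: newton_step_def abs_divide divide_simps mult.commute)
  ultimately show "\<bar>newton_step t x i - lam i\<bar> \<le> \<delta>" by linarith
qed

lemma newton_fixpoint:
  assumes \<delta>: "0 \<le> \<delta>" "\<delta> \<le> 1" and t: "\<bar>t\<bar> \<le> 1"
    and small: "\<And>i. i < n \<Longrightarrow> real n * L * (\<delta> + \<bar>t\<bar> * K0) \<le> \<bar>c i\<bar> / 2"
    and small_t: "\<And>i. i < n \<Longrightarrow> L * (\<bar>t\<bar> * K0) \<le> \<bar>c i\<bar> * \<delta> / 2"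
  shows "\<exists>X\<in>box \<delta>. \<forall>i<n. det (M i X t) = 0"
proof -
  interpret sup_ball_contraction "newton_step t" n lam \<delta>
  proof
    show "newton_step t x \<in> box \<delta>" if "x \<in> box \<delta>" for x
      by (rule newton_step_maps_box[OF that \<delta> t small small_t])
    show "\<bar>newton_step t x i - newton_step t y i\<bar> \<le> \<rho> / 2"
      if "x \<in> box \<delta>" "y \<in> box \<delta>" "\<forall>a<n. \<bar>x a - y a\<bar> \<le> \<rho>" "i < n" for x y \<rho> i
      by (rule newton_step_contracts[OF that(1,2) \<delta> t that(4) small[OF that(4)] that(3)])
  qed (rule \<delta>(1))
  from fixpoint_exists show ?thesis using c_nonzero by (auto simp: newton_step_def)
qed

text \<open>The summand \<open>b = i\<close> vanishes, as \<open>x / 0 = 0\<close>.\<close>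

lemma det_Z0_nonzero:
  assumes i: "i < n" and nondeg: "(\<Sum>b<n. N i b * N b i / (lam i - lam b)) \<noteq> 0"
  shows "det (Z i lam 0) \<noteq> 0"
proof
  assume "det (Z i lam 0) = 0"
  then obtain v where v: "v \<in> carrier_vec n" "v \<noteq> 0\<^sub>v n" "Z i lam 0 *\<^sub>v v = 0\<^sub>v n"
    using det_0_iff_vec_prod_zero[OF rescaled_shift_mat_carrier] by blast
  have row: "(\<Sum>b<n. Z i lam 0 $$ (a,b) * v $ b) = 0" if a: "a < n" for a
  proof -
    have "(Z i lam 0 *\<^sub>v v) $ a = 0" using v(3) a by simp
    thus ?thesis using a v(1) by (simp add: scalar_prod_def row_def atLeast0LessThan)
  qed
  have v_a: "v $ a = N a i * v $ i / (lam i - lam a)" if a: "a < n" and "a \<noteq> i" for a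
  proof -
    have "(\<Sum>b<n. Z i lam 0 $$ (a,b) * v $ b)
        = (\<Sum>b<n. (if b = i then - N a i * v $ i else 0) + (if b = a then (lam i - lam a) * v $ a else 0))"
      by (rule sum.cong) (use a \<open>a \<noteq> i\<close> in auto)
    also have "\<dots> = - N a i * v $ i + (lam i - lam a) * v $ a"
      using a i by (simp add: sum.distrib)
    finally have "- N a i * v $ i + (lam i - lam a) * v $ a = 0" using row[OF a] by simp
    moreover have "lam i - lam a \<noteq> 0" using lam_distinct[OF i a] \<open>a \<noteq> i\<close> by auto
    ultimately show ?thesis by (simp add: field_simps)
  qed
  have "(\<Sum>b<n. Z i lam 0 $$ (i,b) * v $ b) = (\<Sum>b<n. - (v $ i * (N i b * N b i / (lam i - lam b))))"
  proof (rule sum.cong)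
    fix b assume "b \<in> {..<n}"
    thus "Z i lam 0 $$ (i,b) * v $ b = - (v $ i * (N i b * N b i / (lam i - lam b)))"
      using i by (cases "b = i") (simp_all add: v_a)
  qed simp
  also have "\<dots> = - (v $ i * (\<Sum>b<n. N i b * N b i / (lam i - lam b)))"
    by (simp add: sum_negf sum_distrib_left)
  finally have "v $ i = 0" using row[OF i] nondeg by simp
  have "v = 0\<^sub>v n"
  proof (rule eq_vecI)
    fix a assume "a < dim_vec (0\<^sub>v n)"
    thus "v $ a = 0\<^sub>v n $ a" using \<open>v $ i = 0\<close> v_a[of a] by (cases "a = i") auto
  qed (use v(1) in simp)
  with v(2) show False by simp
qed

lemma det_Z_close:
  assumes "i < n" "x \<in> box \<delta>" "0 \<le> \<delta>" "\<delta> \<le> 1" "\<bar>t\<bar> \<le> 1"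
  shows "\<bar>det (Z i lam 0) - det (Z i x t)\<bar> \<le> L * (\<delta> + \<bar>t\<bar> * K0)"
  unfolding L_def mult.assoc[symmetric]
  by (rule abs_det_diff_le[OF rescaled_shift_mat_carrier rescaled_shift_mat_carrier K_ge_1 _ Z_entries_close])
     (use assms K0_nonneg in auto)

lemma diagonal_entry_moves:
  assumes i: "i < n" and x: "x \<in> box \<delta>" "0 \<le> \<delta>" "\<delta> \<le> 1" and t: "\<bar>t\<bar> \<le> 1" "t \<noteq> 0"
    and root: "det (M i x t) = 0" and small: "L * (\<delta> + \<bar>t\<bar> * K0) < \<bar>det (Z i lam 0)\<bar>"
  shows "x i \<noteq> lam i"
proof
  assume "x i = lam i"
  hence "det (Z i x t) = 0" using det_shift_mat_rescaled[OF i] root t(2) by simp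
  thus False using det_Z_close[OF i x t(1)] small by simp
qed

lemma small_parameters_exist:
  assumes nondeg: "\<And>i. i < n \<Longrightarrow> (\<Sum>b<n. N i b * N b i / (lam i - lam b)) \<noteq> 0"
    and F: "finite F"
  obtains \<rho> \<delta> where "0 < \<rho>" "\<rho> < 1" "\<And>i. i < n \<Longrightarrow> \<rho> * (L * K0) < \<bar>c i\<bar> / 2"
    and "0 < \<delta>" "\<delta> < 1"
    and "\<And>i. i < n \<Longrightarrow> \<delta> * (real n * L * (1 + \<rho> * K0)) < \<bar>c i\<bar> / 2"
    and "\<And>i. i < n \<Longrightarrow> \<delta> * (L * (1 + \<rho> * K0)) < \<bar>det (Z i lam 0)\<bar>"
    and "\<And>i f. i < n \<Longrightarrow> f \<in> F \<Longrightarrow> f \<noteq> lam i \<Longrightarrow> \<delta> < \<bar>f - lam i\<bar>"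
proof -
  have c_pos: "0 < \<bar>c i\<bar>" and Z_pos: "0 < \<bar>det (Z i lam 0)\<bar>" if "i < n" for i
    using c_nonzero det_Z0_nonzero nondeg that by auto
  have "\<forall>\<^sub>F \<rho> in at_right 0. \<rho> * 1 < 1 \<and> (\<forall>i\<in>{..<n}. \<rho> * (L * K0) < \<bar>c i\<bar> / 2)"
    using c_pos by (intro eventually_conj eventually_ball_finite ballI eventually_at_right_0_mult_less) auto
  then obtain \<rho> where \<rho>: "0 < \<rho>" "\<rho> < 1" "\<And>i. i < n \<Longrightarrow> \<rho> * (L * K0) < \<bar>c i\<bar> / 2"
    using exists_at_right_0 by force
  have "\<forall>\<^sub>F \<delta> in at_right 0. \<delta> * 1 < 1
      \<and> (\<forall>i\<in>{..<n}. \<delta> * (real n * L * (1 + \<rho> * K0)) < \<bar>c i\<bar> / 2)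
      \<and> (\<forall>i\<in>{..<n}. \<delta> * (L * (1 + \<rho> * K0)) < \<bar>det (Z i lam 0)\<bar>)
      \<and> (\<forall>i\<in>{..<n}. \<forall>f\<in>F. f \<noteq> lam i \<longrightarrow> \<delta> * 1 < \<bar>f - lam i\<bar>)"
  proof (intro eventually_conj eventually_ball_finite ballI eventually_at_right_0_mult_less)
    fix i f assume "i \<in> {..<n}" "f \<in> F"
    show "\<forall>\<^sub>F \<delta> in at_right 0. f \<noteq> lam i \<longrightarrow> \<delta> * 1 < \<bar>f - lam i\<bar>"
      using eventually_at_right_0_mult_less[of "\<bar>f - lam i\<bar>" 1] by (cases "f = lam i") auto
  qed (use c_pos Z_pos F in auto)
  then obtain \<delta> where "0 < \<delta>" "\<delta> < 1"
    "\<And>i. i < n \<Longrightarrow> \<delta> * (real n * L * (1 + \<rho> * K0)) < \<bar>c i\<bar> / 2"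
    "\<And>i. i < n \<Longrightarrow> \<delta> * (L * (1 + \<rho> * K0)) < \<bar>det (Z i lam 0)\<bar>"
    "\<And>i f. i < n \<Longrightarrow> f \<in> F \<Longrightarrow> f \<noteq> lam i \<Longrightarrow> \<delta> < \<bar>f - lam i\<bar>"
    using exists_at_right_0 by force
  with \<rho> show ?thesis by (rule that)
qed

lemma diagonal_solution_exists:
  assumes nondeg: "\<And>i. i < n \<Longrightarrow> (\<Sum>b<n. N i b * N b i / (lam i - lam b)) \<noteq> 0"
    and F: "finite F"
  shows "\<exists>x t. t \<noteq> 0 \<and> (\<forall>i<n. det (M i x t) = 0) \<and> (\<forall>i<n. x i \<notin> F)"
proof -
  obtain \<rho> \<delta> where \<rho>: "0 < \<rho>" "\<rho> < 1" "\<And>i. i < n \<Longrightarrow> \<rho> * (L * K0) < \<bar>c i\<bar> / 2"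
    and \<delta>: "0 < \<delta>" "\<delta> < 1"
    and small: "\<And>i. i < n \<Longrightarrow> \<delta> * (real n * L * (1 + \<rho> * K0)) < \<bar>c i\<bar> / 2"
    and small_Z: "\<And>i. i < n \<Longrightarrow> \<delta> * (L * (1 + \<rho> * K0)) < \<bar>det (Z i lam 0)\<bar>"
    and sep: "\<And>i f. i < n \<Longrightarrow> f \<in> F \<Longrightarrow> f \<noteq> lam i \<Longrightarrow> \<delta> < \<bar>f - lam i\<bar>"
    using small_parameters_exist[OF nondeg F] by blast
  define t where "t = \<delta> * \<rho>"
  have t: "0 < t" "t \<le> 1" using \<delta> \<rho> by (auto simp: t_def mult_le_one)
  have \<eta>: "\<delta> + \<bar>t\<bar> * K0 = \<delta> * (1 + \<rho> * K0)" using t by (simp add: t_def algebra_simps)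
  obtain x where x: "x \<in> box \<delta>" and root: "\<forall>i<n. det (M i x t) = 0"
  proof -
    have "\<exists>x\<in>box \<delta>. \<forall>i<n. det (M i x t) = 0"
    proof (rule newton_fixpoint)
      fix i assume "i < n"
      show "real n * L * (\<delta> + \<bar>t\<bar> * K0) \<le> \<bar>c i\<bar> / 2"
        using small[OF \<open>i < n\<close>] unfolding \<eta> by (simp add: algebra_simps)
      have "L * (\<bar>t\<bar> * K0) = \<delta> * (\<rho> * (L * K0))" using t by (simp add: t_def algebra_simps)
      also have "\<dots> \<le> \<delta> * (\<bar>c i\<bar> / 2)"
        using \<rho>(3)[OF \<open>i < n\<close>] \<delta> by (intro mult_left_mono) auto
      finally show "L * (\<bar>t\<bar> * K0) \<le> \<bar>c i\<bar> * \<delta> / 2" by (simp add: mult.commute)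
    qed (use \<delta> t in auto)
    thus ?thesis using that by blast
  qed
  have "x i \<notin> F" if i: "i < n" for i
  proof
    assume "x i \<in> F"
    have "L * (\<delta> + \<bar>t\<bar> * K0) < \<bar>det (Z i lam 0)\<bar>"
      using small_Z[OF i] unfolding \<eta> by (simp add: algebra_simps)
    hence "x i \<noteq> lam i"
      by (intro diagonal_entry_moves[OF i x]) (use \<delta> t root i in auto)
    moreover have "\<bar>x i - lam i\<bar> \<le> \<delta>" using x i by (simp add: sup_ball_def)
    ultimately show False using sep[OF i \<open>x i \<in> F\<close>] by simp
  qed
  thus ?thesis using t root by (intro exI[of _ x] exI[of _ t]) auto
qed

end

lemma exists_nonroot_weight:
  fixes lam :: "nat \<Rightarrow> real"
  assumes E: "simple_graph n E"
    and nbr: "\<And>i. i < n \<Longrightarrow> \<exists>j. E i j \<and> lam i \<noteq> lam j"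
  shows "\<exists>s. s \<noteq> 0 \<and> (\<forall>i<n. (\<Sum>b<n. if E i b then s ^ (2 * (i + b)) / (lam i - lam b) else 0) \<noteq> 0)"
proof -
  define p where "p i = (\<Sum>b<n. if E i b then monom (1 / (lam i - lam b)) (2 * (i + b)) else 0)" for i
  have p_nonzero: "p i \<noteq> 0" if i: "i < n" for i
  proof -
    obtain j where j: "E i j" "lam i \<noteq> lam j" using nbr[OF i] by blast
    have "j < n" using E j(1) unfolding simple_graph_def by blast
    have "coeff (p i) (2 * (i + j)) = (\<Sum>b<n. if b = j then 1 / (lam i - lam j) else 0)"
      unfolding p_def coeff_sum by (rule sum.cong) (auto simp: coeff_monom j)
    also have "\<dots> \<noteq> 0" using \<open>j < n\<close> j(2) by simp
    finally show ?thesis by auto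
  qed
  have "finite (insert 0 (\<Union>i<n. {s. poly (p i) s = 0}))"
    using p_nonzero poly_roots_finite by auto
  then obtain s :: real where "s \<notin> insert 0 (\<Union>i<n. {s. poly (p i) s = 0})"
    using ex_new_if_finite[OF infinite_UNIV_char_0] by blast
  moreover have "poly (p i) s = (\<Sum>b<n. if E i b then s ^ (2 * (i + b)) / (lam i - lam b) else 0)" for i
    unfolding p_def poly_sum by (rule sum.cong) (auto simp: poly_monom)
  ultimately show ?thesis by auto
qed

lemma char_poly_eq_prod_distinct_roots:
  fixes A :: "'a :: field mat"
  assumes A: "A \<in> carrier_mat n n" and lam: "inj_on lam {..<n}"
    and roots: "\<And>i. i < n \<Longrightarrow> poly (char_poly A) (lam i) = 0"
  shows "char_poly A = (\<Prod>i<n. [:- lam i, 1:])"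
proof (rule poly_eqI_degree_lead_coeff[where n = n and A = "lam ` {..<n}"])
  have "degree (\<Prod>i<n. [:- lam i, 1:]) = n \<and> coeff (\<Prod>i<n. [:- lam i, 1:]) n = 1"
    using degree_prod_monic[of n "\<lambda>i. [:- lam i, 1:]"] by (simp add: atLeast0LessThan)
  thus "coeff (char_poly A) n = coeff (\<Prod>i<n. [:- lam i, 1:]) n"
    "degree (char_poly A) \<le> n" "degree (\<Prod>i<n. [:- lam i, 1:]) \<le> n"
    using degree_monic_char_poly[OF A] by auto
  show "n \<le> card (lam ` {..<n})" using lam by (simp add: card_image)
  fix z assume "z \<in> lam ` {..<n}"
  thus "poly (char_poly A) z = poly (\<Prod>i<n. [:- lam i, 1:]) z"
    using roots by (auto simp: poly_prod prod_zero_iff)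
qed

lemma exists_edge_weights:
  fixes lam :: "nat \<Rightarrow> real"
  assumes E: "simple_graph n E" and nbr: "\<And>i. i < n \<Longrightarrow> \<exists>j. E i j" and lam: "inj_on lam {..<n}"
  obtains N :: "nat \<Rightarrow> nat \<Rightarrow> real" where "\<And>a b. N a b = N b a" and "\<And>a b. N a b \<noteq> 0 \<longleftrightarrow> E a b"
    and "\<And>i. i < n \<Longrightarrow> (\<Sum>b<n. N i b * N b i / (lam i - lam b)) \<noteq> 0"
proof -
  have E_sym: "E a b \<Longrightarrow> E b a" and E_bound: "E a b \<Longrightarrow> a < n \<and> b < n \<and> a \<noteq> b" for a b
    using E unfolding simple_graph_def by blast+
  have "\<exists>j. E i j \<and> lam i \<noteq> lam j" if i: "i < n" for i
  proof -
    obtain j where "E i j" using nbr[OF i] by blast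
    thus ?thesis using E_bound[of i j] lam i by (auto dest: inj_onD)
  qed
  then obtain s :: real where s: "s \<noteq> 0"
    and nondeg: "\<And>i. i < n \<Longrightarrow> (\<Sum>b<n. if E i b then s ^ (2 * (i + b)) / (lam i - lam b) else 0) \<noteq> 0"
    using exists_nonroot_weight[OF E] by blast
  define N where "N a b = (if E a b then s ^ (a + b) else 0)" for a b
  show ?thesis
  proof (rule that)
    show "N a b = N b a" for a b by (auto simp: N_def add.commute dest: E_sym)
    show "N a b \<noteq> 0 \<longleftrightarrow> E a b" for a b using s by (simp add: N_def)
    show "(\<Sum>b<n. N i b * N b i / (lam i - lam b)) \<noteq> 0" if "i < n" for i
    proof -
      have "(\<Sum>b<n. N i b * N b i / (lam i - lam b))
          = (\<Sum>b<n. if E i b then s ^ (2 * (i + b)) / (lam i - lam b) else 0)"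
        by (rule sum.cong) (auto simp: N_def E_sym power_add[symmetric] mult_2 add_ac)
      thus ?thesis using nondeg[OF that] by simp
    qed
  qed
qed

lemma S_graph_with_spectrum:
  fixes lam :: "nat \<Rightarrow> real"
  assumes E: "simple_graph n E" and nbr: "\<And>i. i < n \<Longrightarrow> \<exists>j. E i j"
    and lam: "inj_on lam {..<n}" and F: "finite F"
  shows "\<exists>A \<in> S_graph n E. char_poly A = (\<Prod>i<n. [:- lam i, 1:]) \<and> (\<forall>i<n. A $$ (i,i) \<notin> F)"
proof -
  obtain N where N_sym: "\<And>a b. N a b = N b a" and N_E: "\<And>a b. N a b \<noteq> 0 \<longleftrightarrow> E a b"
    and nondeg: "\<And>i. i < n \<Longrightarrow> (\<Sum>b<n. N i b * N b i / (lam i - lam b)) \<noteq> 0"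
    using exists_edge_weights[OF E nbr lam] by blast
  have "\<bar>N a b\<bar> \<le> (\<Sum>a<n. \<Sum>b<n. \<bar>N a b\<bar>)" for a b
  proof (cases "N a b = 0")
    case False
    hence "a < n" "b < n" using N_E E unfolding simple_graph_def by blast+
    thus ?thesis by (rule abs_le_double_sum)
  qed (simp add: sum_nonneg)
  then interpret eigenvalue_perturbation n lam N "\<Sum>a<n. \<Sum>b<n. \<bar>N a b\<bar>"
    by unfold_locales (use lam in \<open>auto dest: inj_onD\<close>)
  obtain x t where t: "t \<noteq> 0" and root: "\<forall>i<n. det (M i x t) = 0" and x: "\<forall>i<n. x i \<notin> F"
    using diagonal_solution_exists[OF nondeg F] by blast
  define A where "A = mat n n (\<lambda>(a,b). if a = b then x a else t * N a b)"
  have A: "A \<in> carrier_mat n n" by (simp add: A_def)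
  have "A \<in> S_graph n E"
    unfolding S_graph_def
  proof (intro CollectI conjI A allI impI)
    show "A\<^sup>T = A" by (rule eq_matI) (auto simp: A_def N_sym)
    fix i j assume "i < n" "j < n" "i \<noteq> j"
    thus "(A $$ (i, j) \<noteq> 0) = E i j" using t N_E by (simp add: A_def)
  qed
  moreover have "char_poly A = (\<Prod>i<n. [:- lam i, 1:])"
    using root by (intro char_poly_eq_prod_distinct_roots[OF A lam]) (simp add: A_def poly_char_poly_eq_det_shift_mat)
  moreover have "\<forall>i<n. A $$ (i,i) \<notin> F" using x by (simp add: A_def)
  ultimately show ?thesis by blast
qed

lemma connected_graph_neighbour:
  assumes "2 \<le> n" "connected_graph n E" "i < n"
  shows "\<exists>j. E i j"
proof -
  define j where "j = (if i = 0 then 1 else 0 :: nat)"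
  have "j < n" "j \<noteq> i" using assms by (auto simp: j_def)
  hence "E\<^sup>*\<^sup>* i j" using assms unfolding connected_graph_def by blast
  thus ?thesis using \<open>j \<noteq> i\<close> by (metis converse_rtranclpE)
qed

lemma enumerate_distinct_mset:
  assumes "size \<sigma> = n" and "\<forall>x. count \<sigma> x \<le> 1"
  obtains lam where "inj_on lam {..<n}" and "\<sigma> = image_mset lam (mset_set {..<n})"
proof -
  have \<sigma>: "\<sigma> = mset_set (set_mset \<sigma>)"
  proof (rule multiset_eqI)
    fix x show "count \<sigma> x = count (mset_set (set_mset \<sigma>)) x"
    proof (cases "x \<in># \<sigma>")
      case True
      hence "0 < count \<sigma> x" by simp
      hence "count \<sigma> x = 1" using assms(2)[rule_format, of x] by linarith
      thus ?thesis using True by (simp add: count_mset_set)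
    qed (simp add: count_mset_set not_in_iff)
  qed
  hence "card (set_mset \<sigma>) = n" using assms(1) by (metis size_mset_set)
  then obtain lam where lam: "bij_betw lam {..<n} (set_mset \<sigma>)"
    using ex_bij_betw_nat_finite[of "set_mset \<sigma>"] by (auto simp: atLeast0LessThan)
  hence "\<sigma> = image_mset lam (mset_set {..<n})"
    by (subst \<sigma>) (simp add: bij_betw_def image_mset_mset_set)
  with bij_betw_imp_inj_on[OF lam] show ?thesis by (rule that)
qed

section \<open>Duplicating a vertex\<close>

lemma S_graph_cong:
  "(\<And>i j. i < m \<Longrightarrow> j < m \<Longrightarrow> i \<noteq> j \<Longrightarrow> G i j \<longleftrightarrow> G' i j) \<Longrightarrow> S_graph m G = S_graph m G'"
  unfolding S_graph_def by auto

lemma S_graph_entry_sym: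
  "B \<in> S_graph m G \<Longrightarrow> i < m \<Longrightarrow> j < m \<Longrightarrow> B $$ (i,j) = B $$ (j,i)"
  unfolding S_graph_def by (metis (mono_tags, lifting) carrier_matD index_transpose_mat(1) mem_Collect_eq)

lemma index_mult_mat_sum:
  "A \<in> carrier_mat n m \<Longrightarrow> B \<in> carrier_mat m p \<Longrightarrow> i < n \<Longrightarrow> j < p \<Longrightarrow>
   (A * B) $$ (i,j) = (\<Sum>l<m. A $$ (i,l) * B $$ (l,j))"
  by (simp add: scalar_prod_def row_def col_def atLeast0LessThan)

lemma char_poly_orthogonal_conj:
  fixes Q D :: "real mat"
  assumes Q: "Q \<in> carrier_mat n n" and D: "D \<in> carrier_mat n n" and orth: "Q * Q\<^sup>T = 1\<^sub>m n"
  shows "char_poly (Q * D * Q\<^sup>T) = char_poly D"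
proof -
  have QT: "Q\<^sup>T \<in> carrier_mat n n" using Q by simp
  have "Q\<^sup>T * Q = 1\<^sub>m n" by (rule mat_mult_left_right_inverse[OF Q QT orth])
  hence "similar_mat (Q * D * Q\<^sup>T) D"
    unfolding similar_mat_def using Q QT D orth by (intro exI[of _ Q] exI[of _ "Q\<^sup>T"] similar_mat_witI) auto
  thus ?thesis by (rule char_poly_similar)
qed

definition relabel_mat :: "nat \<Rightarrow> (nat \<Rightarrow> nat) \<Rightarrow> 'a mat \<Rightarrow> 'a mat" where
  "relabel_mat m \<pi> B = mat m m (\<lambda>(a,b). B $$ (\<pi> a, \<pi> b))"

lemma index_relabel_mat [simp]:
  "a < m \<Longrightarrow> b < m \<Longrightarrow> relabel_mat m \<pi> B $$ (a,b) = B $$ (\<pi> a, \<pi> b)"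
  by (simp add: relabel_mat_def)

lemma char_poly_relabel_mat:
  fixes B :: "real mat"
  assumes B: "B \<in> carrier_mat m m" and \<pi>: "bij_betw \<pi> {..<m} {..<m}"
  shows "char_poly (relabel_mat m \<pi> B) = char_poly B"
proof -
  define P :: "real mat" where "P = mat m m (\<lambda>(a,l). if l = \<pi> a then 1 else 0)"
  have P: "P \<in> carrier_mat m m" and PT: "P\<^sup>T \<in> carrier_mat m m" by (simp_all add: P_def)
  have \<pi>_less: "a < m \<Longrightarrow> \<pi> a < m" for a using \<pi> by (auto simp: bij_betw_def)
  have \<pi>_inj: "a < m \<Longrightarrow> b < m \<Longrightarrow> \<pi> a = \<pi> b \<longleftrightarrow> a = b" for a b
    using \<pi> by (auto simp: bij_betw_def inj_on_def)
  have row_P: "(\<Sum>l<m. P $$ (a,l) * f l) = f (\<pi> a)" if "a < m" for a f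
  proof -
    have "(\<Sum>l<m. P $$ (a,l) * f l) = (\<Sum>l<m. if l = \<pi> a then f (\<pi> a) else 0)"
      by (rule sum.cong) (auto simp: P_def that)
    thus ?thesis using that \<pi>_less by simp
  qed
  have "P * B * P\<^sup>T = relabel_mat m \<pi> B"
  proof (rule eq_matI)
    fix a b assume "a < dim_row (relabel_mat m \<pi> B)" "b < dim_col (relabel_mat m \<pi> B)"
    hence ab: "a < m" "b < m" by (auto simp: relabel_mat_def)
    have "(P * B * P\<^sup>T) $$ (a,b) = (\<Sum>l<m. P $$ (b,l) * (P * B) $$ (a,l))"
      using ab P B by (subst index_mult_mat_sum[OF mult_carrier_mat[OF P B] PT]) (auto simp: mult.commute)
    also have "\<dots> = (P * B) $$ (a, \<pi> b)" by (rule row_P[OF ab(2)])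
    also have "\<dots> = B $$ (\<pi> a, \<pi> b)"
      using ab \<pi>_less by (simp add: index_mult_mat_sum[OF P B] row_P)
    finally show "(P * B * P\<^sup>T) $$ (a,b) = relabel_mat m \<pi> B $$ (a,b)" using ab by simp
  qed (use P B in \<open>auto simp: relabel_mat_def\<close>)
  moreover have "P * P\<^sup>T = 1\<^sub>m m"
  proof (rule eq_matI)
    fix a b assume "a < dim_row (1\<^sub>m m :: real mat)" "b < dim_col (1\<^sub>m m :: real mat)"
    hence ab: "a < m" "b < m" by auto
    have "(P * P\<^sup>T) $$ (a,b) = (\<Sum>l<m. P $$ (a,l) * P $$ (b,l))"
      using ab P by (subst index_mult_mat_sum[OF P PT]) auto
    also have "\<dots> = P $$ (b, \<pi> a)" by (rule row_P[OF ab(1)])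
    also have "\<dots> = 1\<^sub>m m $$ (a,b)" using ab \<pi>_less[OF ab(1)] by (auto simp: P_def \<pi>_inj)
    finally show "(P * P\<^sup>T) $$ (a,b) = 1\<^sub>m m $$ (a,b)" .
  qed (use P in auto)
  ultimately show ?thesis using char_poly_orthogonal_conj[OF P B] by simp
qed

lemma relabel_mat_S_graph:
  assumes B: "B \<in> S_graph m G" and \<pi>: "bij_betw \<pi> {..<m} {..<m}"
  shows "relabel_mat m \<pi> B \<in> S_graph m (\<lambda>a b. G (\<pi> a) (\<pi> b))"
proof -
  have \<pi>_less: "a < m \<Longrightarrow> \<pi> a < m" for a using \<pi> by (auto simp: bij_betw_def)
  have \<pi>_inj: "a < m \<Longrightarrow> b < m \<Longrightarrow> \<pi> a = \<pi> b \<longleftrightarrow> a = b" for a b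
    using \<pi> by (auto simp: bij_betw_def inj_on_def)
  show ?thesis
    using B S_graph_entry_sym[OF B] \<pi>_less \<pi>_inj unfolding S_graph_def
    by (auto simp: relabel_mat_def intro!: eq_matI)
qed

lemma char_poly_append_eigenvalue:
  fixes B :: "'a :: field mat"
  assumes B: "B \<in> carrier_mat k k"
  shows "char_poly (four_block_mat B (0\<^sub>m k 1) (0\<^sub>m 1 k) (mat 1 1 (\<lambda>_. c))) = char_poly B * [:- c, 1:]"
proof -
  let ?C = "mat 1 1 (\<lambda>_. c)"
  have "char_poly_matrix (four_block_mat B (0\<^sub>m k 1) (0\<^sub>m 1 k) ?C)
      = four_block_mat (char_poly_matrix B) (0\<^sub>m k 1) (0\<^sub>m 1 k) (char_poly_matrix ?C)"
    by (rule eq_matI) (use B in \<open>auto simp: char_poly_matrix_def\<close>)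
  hence "char_poly (four_block_mat B (0\<^sub>m k 1) (0\<^sub>m 1 k) ?C) = char_poly B * det (char_poly_matrix ?C)"
    unfolding char_poly_def
    by (simp add: det_four_block_mat_upper_right_zero[OF char_poly_matrix_closed[OF B] refl])
  also have "det (char_poly_matrix ?C) = [:- c, 1:]"
    by (subst det_single) (auto simp: char_poly_matrix_def)
  finally show ?thesis .
qed

lemma exists_mixtures_avoiding:
  fixes a c :: real
  assumes "finite F" "a \<noteq> c"
  shows "\<exists>\<tau>. 0 < \<tau> \<and> \<tau> < 1 \<and> (1 - \<tau>) * a + \<tau> * c \<notin> F \<and> \<tau> * a + (1 - \<tau>) * c \<notin> F"
proof -
  define bad where "bad = (\<lambda>f. (f - a) / (c - a)) ` F \<union> (\<lambda>f. (f - c) / (a - c)) ` F"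
  have "infinite ({0<..<1::real} - bad)"
    using assms(1) by (intro Diff_infinite_finite) (auto simp: bad_def)
  then obtain \<tau> where \<tau>: "\<tau> \<in> {0<..<1}" "\<tau> \<notin> bad" by (metis Diff_iff finite.emptyI ex_in_conv)
  have "(((1 - \<tau>) * a + \<tau> * c) - a) / (c - a) = \<tau>" "((\<tau> * a + (1 - \<tau>) * c) - c) / (a - c) = \<tau>"
    using assms(2) by (simp_all add: field_simps)
  hence "(1 - \<tau>) * a + \<tau> * c \<notin> F" "\<tau> * a + (1 - \<tau>) * c \<notin> F"
    using \<tau>(2) unfolding bad_def by (metis UnCI image_eqI)+
  thus ?thesis using \<tau>(1) by auto
qed

definition dup_index :: "nat \<Rightarrow> nat \<Rightarrow> nat \<Rightarrow> nat" where
  "dup_index k v i = (if i = k then v else i)"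

lemma dup_index_less: "v < k \<Longrightarrow> i < Suc k \<Longrightarrow> dup_index k v i < k"
  by (simp add: dup_index_def)

lemma conj_dup_entries:
  fixes B :: "real mat" and \<alpha> \<beta> :: "nat \<Rightarrow> real" and c :: real
  assumes B: "B \<in> carrier_mat k k" and v: "v < k" and ij: "i < Suc k" "j < Suc k"
  defines "Q \<equiv> mat (Suc k) (Suc k) (\<lambda>(i,l). (if l = dup_index k v i then \<alpha> i else 0) + (if l = k then \<beta> i else 0))"
    and "D \<equiv> four_block_mat B (0\<^sub>m k 1) (0\<^sub>m 1 k) (mat 1 1 (\<lambda>_. c))"
  shows "(Q * D * Q\<^sup>T) $$ (i,j) = \<alpha> i * \<alpha> j * B $$ (dup_index k v i, dup_index k v j) + \<beta> i * \<beta> j * c"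
    and "(Q * Q\<^sup>T) $$ (i,j) = (if dup_index k v i = dup_index k v j then \<alpha> i * \<alpha> j else 0) + \<beta> i * \<beta> j"
proof -
  let ?r = "dup_index k v"
  have Q: "Q \<in> carrier_mat (Suc k) (Suc k)" and D: "D \<in> carrier_mat (Suc k) (Suc k)"
    using B by (auto simp: Q_def D_def)
  have row_Q: "(\<Sum>l<Suc k. Q $$ (i,l) * y l) = \<alpha> i * y (?r i) + \<beta> i * y k" if "i < Suc k" for i y
  proof -
    have "?r i < k" using dup_index_less[OF v that] .
    hence "(\<Sum>l<Suc k. Q $$ (i,l) * y l)
        = (\<Sum>l<Suc k. (if l = ?r i then \<alpha> i * y (?r i) else 0) + (if l = k then \<beta> i * y k else 0))"
      using that by (intro sum.cong) (auto simp: Q_def)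
    thus ?thesis using \<open>?r i < k\<close> by (simp add: sum.distrib)
  qed
  have QX: "(Q * X) $$ (i,j) = \<alpha> i * X $$ (?r i, j) + \<beta> i * X $$ (k, j)"
    if "X \<in> carrier_mat (Suc k) (Suc k)" "i < Suc k" "j < Suc k" for X i j
    unfolding index_mult_mat_sum[OF Q that] by (rule row_Q[OF that(2)])
  have XQT: "(X * Q\<^sup>T) $$ (i,j) = \<alpha> j * X $$ (i, ?r j) + \<beta> j * X $$ (i, k)"
    if "X \<in> carrier_mat (Suc k) (Suc k)" "i < Suc k" "j < Suc k" for X i j
  proof -
    have "(X * Q\<^sup>T) $$ (i,j) = (\<Sum>l<Suc k. Q $$ (j,l) * X $$ (i,l))"
      using that Q by (subst index_mult_mat_sum[OF that(1)]) (auto simp: mult.commute)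
    also have "\<dots> = \<alpha> j * X $$ (i, ?r j) + \<beta> j * X $$ (i, k)" by (rule row_Q[OF that(3)])
    finally show ?thesis .
  qed
  have r_less: "?r i < k" "?r j < k" using dup_index_less[OF v] ij by auto
  have "(Q * D * Q\<^sup>T) $$ (i,j) = \<alpha> j * (Q * D) $$ (i, ?r j) + \<beta> j * (Q * D) $$ (i, k)"
    by (rule XQT[OF mult_carrier_mat[OF Q D] ij])
  also have "\<dots> = \<alpha> j * (\<alpha> i * D $$ (?r i, ?r j) + \<beta> i * D $$ (k, ?r j))
      + \<beta> j * (\<alpha> i * D $$ (?r i, k) + \<beta> i * D $$ (k, k))"
    using ij r_less by (simp add: QX[OF D])
  also have "\<dots> = \<alpha> i * \<alpha> j * B $$ (?r i, ?r j) + \<beta> i * \<beta> j * c"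
    using r_less B by (simp add: D_def)
  finally show "(Q * D * Q\<^sup>T) $$ (i,j) = \<alpha> i * \<alpha> j * B $$ (?r i, ?r j) + \<beta> i * \<beta> j * c" .
  have "(Q * Q\<^sup>T) $$ (i,j) = \<alpha> j * Q $$ (i, ?r j) + \<beta> j * Q $$ (i, k)"
    by (rule XQT[OF Q ij])
  also have "\<dots> = (if ?r i = ?r j then \<alpha> i * \<alpha> j else 0) + \<beta> i * \<beta> j"
    using ij r_less by (auto simp: Q_def)
  finally show "(Q * Q\<^sup>T) $$ (i,j) = (if ?r i = ?r j then \<alpha> i * \<alpha> j else 0) + \<beta> i * \<beta> j" .
qed

text \<open>Row \<open>i\<close> of the rotation with cosine \<open>p\<close> and sine \<open>q\<close> in the plane of the unit vectors at \<open>v\<close>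
  and \<open>k\<close> is \<open>givens_coeff k v p q i\<close> times the unit vector at \<open>dup_index k v i\<close> plus
  \<open>givens_coeff_last k v p q i\<close> times the unit vector at \<open>k\<close>.\<close>

definition givens_coeff :: "nat \<Rightarrow> nat \<Rightarrow> real \<Rightarrow> real \<Rightarrow> nat \<Rightarrow> real" where
  "givens_coeff k v p q i = (if i = v then p else if i = k then q else 1)"

definition givens_coeff_last :: "nat \<Rightarrow> nat \<Rightarrow> real \<Rightarrow> real \<Rightarrow> nat \<Rightarrow> real" where
  "givens_coeff_last k v p q i = (if i = v then - q else if i = k then p else 0)"

lemma rotated_extension:
  fixes B :: "real mat"
  assumes B: "B \<in> carrier_mat k k" and v: "v < k" and pq: "p * p + q * q = 1"
  obtains B' where "B' \<in> carrier_mat (Suc k) (Suc k)" and "char_poly B' = char_poly B * [:- c, 1:]"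
    and "\<And>i j. i < Suc k \<Longrightarrow> j < Suc k \<Longrightarrow> B' $$ (i,j) =
      givens_coeff k v p q i * givens_coeff k v p q j * B $$ (dup_index k v i, dup_index k v j)
      + givens_coeff_last k v p q i * givens_coeff_last k v p q j * c"
proof -
  let ?r = "dup_index k v" and ?\<alpha> = "givens_coeff k v p q" and ?\<beta> = "givens_coeff_last k v p q"
  define Q where "Q = mat (Suc k) (Suc k) (\<lambda>(i,l). (if l = ?r i then ?\<alpha> i else 0) + (if l = k then ?\<beta> i else 0))"
  define D where "D = four_block_mat B (0\<^sub>m k 1) (0\<^sub>m 1 k) (mat 1 1 (\<lambda>_. c))"
  have Q: "Q \<in> carrier_mat (Suc k) (Suc k)" and D: "D \<in> carrier_mat (Suc k) (Suc k)"
    using B by (auto simp: Q_def D_def)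
  have "Q * Q\<^sup>T = 1\<^sub>m (Suc k)"
  proof (rule eq_matI)
    fix i j assume "i < dim_row (1\<^sub>m (Suc k) :: real mat)" "j < dim_col (1\<^sub>m (Suc k) :: real mat)"
    hence ij: "i < Suc k" "j < Suc k" by auto
    have "(Q * Q\<^sup>T) $$ (i,j) = (if ?r i = ?r j then ?\<alpha> i * ?\<alpha> j else 0) + ?\<beta> i * ?\<beta> j"
      unfolding Q_def by (rule conj_dup_entries(2)[OF B v ij])
    also have "\<dots> = 1\<^sub>m (Suc k) $$ (i,j)"
      using ij v pq by (auto simp: givens_coeff_def givens_coeff_last_def dup_index_def)
    finally show "(Q * Q\<^sup>T) $$ (i,j) = 1\<^sub>m (Suc k) $$ (i,j)" .
  qed (use Q in auto)
  hence "char_poly (Q * D * Q\<^sup>T) = char_poly B * [:- c, 1:]"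
    using char_poly_orthogonal_conj[OF Q D] char_poly_append_eigenvalue[OF B] by (simp add: D_def)
  moreover have "Q * D * Q\<^sup>T \<in> carrier_mat (Suc k) (Suc k)" using Q D by simp
  moreover have "(Q * D * Q\<^sup>T) $$ (i,j) = ?\<alpha> i * ?\<alpha> j * B $$ (?r i, ?r j) + ?\<beta> i * ?\<beta> j * c"
    if "i < Suc k" "j < Suc k" for i j
    unfolding Q_def D_def by (rule conj_dup_entries(1)[OF B v that])
  ultimately show ?thesis using that by blast
qed

text \<open>The edge between \<open>v\<close> and the new vertex \<open>k\<close> gets the weight \<open>p q (B\<^sub>v\<^sub>v - c)\<close>.\<close>

lemma rotated_extension_S_graph:
  fixes B B' :: "real mat"
  assumes B: "B \<in> S_graph k G" and v: "v < k" and pq: "0 < p" "0 < q" and "B $$ (v,v) \<noteq> c"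
    and B': "B' \<in> carrier_mat (Suc k) (Suc k)"
    and entry: "\<And>i j. i < Suc k \<Longrightarrow> j < Suc k \<Longrightarrow> B' $$ (i,j) =
      givens_coeff k v p q i * givens_coeff k v p q j * B $$ (dup_index k v i, dup_index k v j)
      + givens_coeff_last k v p q i * givens_coeff_last k v p q j * c"
  shows "B' \<in> S_graph (Suc k) (\<lambda>a b. dup_index k v a = dup_index k v b \<or> G (dup_index k v a) (dup_index k v b))"
  unfolding S_graph_def
proof (intro CollectI conjI B' allI impI)
  let ?r = "dup_index k v" and ?\<alpha> = "givens_coeff k v p q" and ?\<beta> = "givens_coeff_last k v p q"
  show "B'\<^sup>T = B'"
    by (rule eq_matI) (use B' dup_index_less[OF v] in \<open>auto simp: entry S_graph_entry_sym[OF B]\<close>)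
  fix i j assume ij: "i < Suc k" "j < Suc k" "i \<noteq> j"
  show "(B' $$ (i,j) \<noteq> 0) = (?r i = ?r j \<or> G (?r i) (?r j))"
  proof (cases "?r i = ?r j")
    case True
    hence "i = v \<and> j = k \<or> i = k \<and> j = v" using ij v by (auto simp: dup_index_def split: if_splits)
    hence "B' $$ (i,j) = p * q * (B $$ (v,v) - c)"
      using entry[OF ij(1,2)] v by (auto simp: givens_coeff_def givens_coeff_last_def dup_index_def algebra_simps)
    thus ?thesis using True pq \<open>B $$ (v,v) \<noteq> c\<close> by simp
  next
    case False
    hence "?\<beta> i * ?\<beta> j = 0" using ij v by (auto simp: givens_coeff_last_def dup_index_def)
    hence "B' $$ (i,j) = ?\<alpha> i * ?\<alpha> j * B $$ (?r i, ?r j)"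
      using entry[OF ij(1,2)] by (metis add_0_right mult_zero_left)
    moreover have "?\<alpha> i \<noteq> 0" "?\<alpha> j \<noteq> 0" using pq by (auto simp: givens_coeff_def)
    moreover have "B $$ (?r i, ?r j) \<noteq> 0 \<longleftrightarrow> G (?r i) (?r j)"
      using B False dup_index_less[OF v] ij unfolding S_graph_def by auto
    ultimately show ?thesis using False by simp
  qed
qed

lemma S_graph_duplicate_vertex:
  fixes B :: "real mat"
  assumes B: "B \<in> S_graph k G" and v: "v < k" and F: "finite F" "c \<in> F"
    and diag: "\<forall>i<k. B $$ (i,i) \<notin> F"
  shows "\<exists>B' \<in> S_graph (Suc k) (\<lambda>a b. dup_index k v a = dup_index k v b \<or> G (dup_index k v a) (dup_index k v b)).
    char_poly B' = char_poly B * [:- c, 1:] \<and> (\<forall>i<Suc k. B' $$ (i,i) \<notin> F)"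
proof -
  have "B $$ (v,v) \<noteq> c" using diag v F(2) by auto
  then obtain \<tau> where \<tau>: "0 < \<tau>" "\<tau> < 1"
    and mix: "(1 - \<tau>) * B $$ (v,v) + \<tau> * c \<notin> F" "\<tau> * B $$ (v,v) + (1 - \<tau>) * c \<notin> F"
    using exists_mixtures_avoiding[OF F(1)] by blast
  define p q where "p = sqrt (1 - \<tau>)" and "q = sqrt \<tau>"
  have pq: "0 < p" "0 < q" "p * p = 1 - \<tau>" "q * q = \<tau>" using \<tau> by (auto simp: p_def q_def)
  have Bc: "B \<in> carrier_mat k k" using B by (simp add: S_graph_def)
  have "p * p + q * q = 1" using pq by simp
  then obtain B' where B': "B' \<in> carrier_mat (Suc k) (Suc k)" and poly: "char_poly B' = char_poly B * [:- c, 1:]"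
    and entry: "\<And>i j. i < Suc k \<Longrightarrow> j < Suc k \<Longrightarrow> B' $$ (i,j) =
      givens_coeff k v p q i * givens_coeff k v p q j * B $$ (dup_index k v i, dup_index k v j)
      + givens_coeff_last k v p q i * givens_coeff_last k v p q j * c"
    using rotated_extension[OF Bc v] by blast
  have "B' $$ (i,i) \<notin> F" if i: "i < Suc k" for i
  proof -
    consider "i = v" | "i = k" | "i < k" "i \<noteq> v" using i by linarith
    thus ?thesis
      by cases (use entry[OF i i] mix diag v pq in
          \<open>simp_all add: givens_coeff_def givens_coeff_last_def dup_index_def\<close>)
  qed
  with rotated_extension_S_graph[OF B v pq(1,2) \<open>B $$ (v,v) \<noteq> c\<close> B' entry] poly show ?thesis by blast
qed

section \<open>Blowups\<close>

definition blowup_adj :: "(nat \<Rightarrow> nat \<Rightarrow> bool) \<Rightarrow> (nat \<Rightarrow> nat) \<Rightarrow> nat \<Rightarrow> nat \<Rightarrow> nat \<Rightarrow> bool" where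
  "blowup_adj E f m u v \<longleftrightarrow> u < m \<and> v < m \<and> u \<noteq> v \<and> (f u = f v \<or> E (f u) (f v))"

lemma is_blowupE:
  assumes "is_blowup n E m H"
  obtains f where "f ` {..<m} = {..<n}" and "H = blowup_adj E f m"
proof -
  from assms obtain f where f: "f ` {..<m} = {..<n}"
    and H: "\<forall>u v. H u v \<longleftrightarrow> u < m \<and> v < m \<and> u \<noteq> v \<and> (f u = f v \<or> E (f u) (f v))"
    unfolding is_blowup_def atLeast0LessThan by blast
  have "H = blowup_adj E f m" using H by (intro ext) (simp add: blowup_adj_def)
  with f show ?thesis by (rule that)
qed

lemma surj_on_lessThan_card_le:
  fixes m n :: nat
  assumes "f ` {..<m} = {..<n}" shows "n \<le> m"
proof -
  have "card (f ` {..<m}) \<le> card {..<m}" by (rule card_image_le) simp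
  thus ?thesis using assms by simp
qed

lemma S_graph_blowup_bij:
  fixes A :: "real mat"
  assumes A: "A \<in> S_graph n E" and diag: "\<forall>i<n. A $$ (i,i) \<notin> F" and f: "f ` {..<n} = {..<n}"
  shows "\<exists>B \<in> S_graph n (blowup_adj E f n). char_poly B = char_poly A \<and> (\<forall>i<n. B $$ (i,i) \<notin> F)"
proof -
  have "inj_on f {..<n}" using f by (intro eq_card_imp_inj_on) auto
  hence bij: "bij_betw f {..<n} {..<n}" using f by (simp add: bij_betw_def)
  have "S_graph n (\<lambda>a b. E (f a) (f b)) = S_graph n (blowup_adj E f n)"
    using \<open>inj_on f {..<n}\<close> by (intro S_graph_cong) (auto simp: blowup_adj_def dest: inj_onD)
  hence "relabel_mat n f A \<in> S_graph n (blowup_adj E f n)" using relabel_mat_S_graph[OF A bij] by simp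
  moreover have "char_poly (relabel_mat n f A) = char_poly A"
    using A by (intro char_poly_relabel_mat[OF _ bij]) (simp add: S_graph_def)
  moreover have "\<forall>i<n. relabel_mat n f A $$ (i,i) \<notin> F" using diag bij_betw_apply[OF bij] by auto
  ultimately show ?thesis by blast
qed

lemma blowup_split_vertex:
  assumes f: "f ` {..<Suc m} = {..<n}" and "n \<le> m"
  obtains \<pi> v f' where "bij_betw \<pi> {..<Suc m} {..<Suc m}" "\<And>a. \<pi> (\<pi> a) = a" "v < m"
    "f' ` {..<m} = {..<n}" "\<And>a. a < Suc m \<Longrightarrow> f (\<pi> a) = f' (dup_index m v a)"
proof -
  have "\<not> inj_on f {..<Suc m}"
    using f \<open>n \<le> m\<close> card_image[of f "{..<Suc m}"] by auto
  then obtain w w' where w: "w < Suc m" "w' < Suc m" "w \<noteq> w'" "f w = f w'"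
    unfolding inj_on_def by auto
  define \<pi> where "\<pi> x = (if x = w then m else if x = m then w else x)" for x
  define v where "v = \<pi> w'"
  define f' where "f' = f \<circ> \<pi>"
  have \<pi>\<pi>: "\<pi> (\<pi> a) = a" for a by (simp add: \<pi>_def)
  have \<pi>_less: "a < Suc m \<Longrightarrow> \<pi> a < Suc m" for a using w by (simp add: \<pi>_def)
  have bij: "bij_betw \<pi> {..<Suc m} {..<Suc m}"
    by (rule bij_betwI[where g = \<pi>]) (auto simp: \<pi>\<pi> \<pi>_less)
  have v: "v < m" using w \<pi>_less[of w'] by (auto simp: v_def \<pi>_def)
  have f'_dup: "f (\<pi> a) = f' (dup_index m v a)" if "a < Suc m" for a
    using w by (auto simp: f'_def dup_index_def v_def \<pi>\<pi>) (simp add: \<pi>_def)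
  have "f' ` {..<m} = {..<n}"
  proof
    show "f' ` {..<m} \<subseteq> {..<n}" using f \<pi>_less by (auto simp: f'_def)
    show "{..<n} \<subseteq> f' ` {..<m}"
    proof
      fix y assume "y \<in> {..<n}"
      hence "y \<in> f ` {..<Suc m}" using f by simp
      then obtain z where z: "z < Suc m" "y = f z" by auto
      hence "\<pi> z < Suc m" "y = f (\<pi> (\<pi> z))" by (simp_all add: \<pi>_less \<pi>\<pi>)
      hence "y = f' (dup_index m v (\<pi> z))" by (simp add: f'_dup)
      moreover have "dup_index m v (\<pi> z) < m" using dup_index_less[OF v \<open>\<pi> z < Suc m\<close>] .
      ultimately show "y \<in> f' ` {..<m}" by blast
    qed
  qed
  with bij \<pi>\<pi> v f'_dup show ?thesis using that by blast
qed

lemma S_graph_blowup_add_vertex: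
  fixes B :: "real mat"
  assumes B: "B \<in> S_graph m (blowup_adj E f' m)" and diag: "\<forall>i<m. B $$ (i,i) \<notin> F"
    and F: "finite F" "c \<in> F"
    and \<pi>: "bij_betw \<pi> {..<Suc m} {..<Suc m}" "\<And>a. \<pi> (\<pi> a) = a" and v: "v < m"
    and f_dup: "\<And>a. a < Suc m \<Longrightarrow> f (\<pi> a) = f' (dup_index m v a)"
  shows "\<exists>B' \<in> S_graph (Suc m) (blowup_adj E f (Suc m)).
    char_poly B' = char_poly B * [:- c, 1:] \<and> (\<forall>i<Suc m. B' $$ (i,i) \<notin> F)"
proof -
  let ?r = "dup_index m v"
  from S_graph_duplicate_vertex[OF B v F diag]
  obtain B2 where B2: "B2 \<in> S_graph (Suc m) (\<lambda>a b. ?r a = ?r b \<or> blowup_adj E f' m (?r a) (?r b))"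
    and B2_poly: "char_poly B2 = char_poly B * [:- c, 1:]" and B2_diag: "\<forall>i<Suc m. B2 $$ (i,i) \<notin> F"
    by blast
  have "S_graph (Suc m) (\<lambda>a b. ?r a = ?r b \<or> blowup_adj E f' m (?r a) (?r b))
      = S_graph (Suc m) (\<lambda>a b. blowup_adj E f (Suc m) (\<pi> a) (\<pi> b))"
  proof (rule S_graph_cong)
    fix a b assume ab: "a < Suc m" "b < Suc m" "a \<noteq> b"
    have "\<pi> a \<noteq> \<pi> b" using ab(3) \<pi>(2)[of a] \<pi>(2)[of b] by metis
    moreover have "\<pi> a < Suc m" "\<pi> b < Suc m"
      using bij_betw_apply[OF \<pi>(1), of a] bij_betw_apply[OF \<pi>(1), of b] ab(1,2) by simp_all
    moreover have "?r a < m" "?r b < m" using dup_index_less[OF v] ab(1,2) by simp_all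
    ultimately show "(?r a = ?r b \<or> blowup_adj E f' m (?r a) (?r b)) \<longleftrightarrow> blowup_adj E f (Suc m) (\<pi> a) (\<pi> b)"
      using f_dup ab by (auto simp: blowup_adj_def)
  qed
  hence "B2 \<in> S_graph (Suc m) (\<lambda>a b. blowup_adj E f (Suc m) (\<pi> a) (\<pi> b))" using B2 by simp
  hence "relabel_mat (Suc m) \<pi> B2 \<in> S_graph (Suc m) (\<lambda>a b. blowup_adj E f (Suc m) (\<pi> (\<pi> a)) (\<pi> (\<pi> b)))"
    by (rule relabel_mat_S_graph[OF _ \<pi>(1)])
  hence "relabel_mat (Suc m) \<pi> B2 \<in> S_graph (Suc m) (blowup_adj E f (Suc m))" by (simp add: \<pi>(2))
  moreover have "char_poly (relabel_mat (Suc m) \<pi> B2) = char_poly B2"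
    by (rule char_poly_relabel_mat[OF _ \<pi>(1)]) (use B2 in \<open>simp add: S_graph_def\<close>)
  hence "char_poly (relabel_mat (Suc m) \<pi> B2) = char_poly B * [:- c, 1:]" using B2_poly by simp
  moreover have "\<forall>i<Suc m. relabel_mat (Suc m) \<pi> B2 $$ (i,i) \<notin> F"
    using B2_diag bij_betw_apply[OF \<pi>(1)] by auto
  ultimately show ?thesis by blast
qed

lemma S_graph_blowup_with_eigenvalues:
  fixes A :: "real mat"
  assumes A: "A \<in> S_graph n E" and diag: "\<forall>i<n. A $$ (i,i) \<notin> F" and F: "finite F"
    and f: "f ` {..<m} = {..<n}" and \<sigma>': "size \<sigma>' = m - n" "set_mset \<sigma>' \<subseteq> F"
  shows "\<exists>B \<in> S_graph m (blowup_adj E f m).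
    char_poly B = char_poly A * (\<Prod>a\<in>#\<sigma>'. [:- a, 1:]) \<and> (\<forall>i<m. B $$ (i,i) \<notin> F)"
  using f \<sigma>'
proof (induction "m - n" arbitrary: m f \<sigma>')
  case 0
  hence "m = n" "\<sigma>' = {#}" using surj_on_lessThan_card_le[OF 0(2)] by simp_all
  thus ?case using S_graph_blowup_bij[OF A diag] 0 by simp
next
  case (Suc d)
  then obtain m' where m: "m = Suc m'" and "n \<le> m'" and d: "d = m' - n" by (cases m) auto
  have "f ` {..<Suc m'} = {..<n}" using Suc.prems(1) m by simp
  then obtain \<pi> v f' where \<pi>: "bij_betw \<pi> {..<Suc m'} {..<Suc m'}" "\<And>a. \<pi> (\<pi> a) = a"
    and v: "v < m'" and f': "f' ` {..<m'} = {..<n}"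
    and f_dup: "\<And>a. a < Suc m' \<Longrightarrow> f (\<pi> a) = f' (dup_index m' v a)"
    using blowup_split_vertex[OF _ \<open>n \<le> m'\<close>] by blast
  have "\<sigma>' \<noteq> {#}" using Suc.prems(2) Suc.hyps(2) by auto
  then obtain c \<sigma>'' where \<sigma>': "\<sigma>' = add_mset c \<sigma>''" by (metis multiset_cases)
  hence "size \<sigma>'' = m' - n" "set_mset \<sigma>'' \<subseteq> F" "c \<in> F"
    using Suc.prems(2,3) m \<open>n \<le> m'\<close> by auto
  then obtain B where B: "B \<in> S_graph m' (blowup_adj E f' m')"
    and B_poly: "char_poly B = char_poly A * (\<Prod>a\<in>#\<sigma>''. [:- a, 1:])" and B_diag: "\<forall>i<m'. B $$ (i,i) \<notin> F"
    using Suc.hyps(1)[OF d f'] by blast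
  from S_graph_blowup_add_vertex[OF B B_diag F \<open>c \<in> F\<close> \<pi> v f_dup] show ?case
    unfolding m \<sigma>' by (auto simp: B_poly ac_simps)
qed

theorem theorem2p5:
  fixes n m :: nat and E H :: "nat \<Rightarrow> nat \<Rightarrow> bool"
    and \<sigma> \<sigma>' :: "real multiset"
  assumes "n \<ge> 2"
    and "simple_graph n E"
    and "connected_graph n E"
    and "is_blowup n E m H"
    and "size \<sigma> = n"
    and "\<forall>x. count \<sigma> x \<le> 1"
    and "size \<sigma>' = m - n"
  shows "\<exists>A \<in> S_graph m H. is_spectrum A (\<sigma> + \<sigma>')"
proof -
  obtain f where f: "f ` {..<m} = {..<n}" and H: "H = blowup_adj E f m"
    using assms(4) by (rule is_blowupE)
  obtain lam where lam: "inj_on lam {..<n}" and \<sigma>: "\<sigma> = image_mset lam (mset_set {..<n})"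
    using assms(5,6) by (rule enumerate_distinct_mset)
  obtain A where A: "A \<in> S_graph n E" and A_poly: "char_poly A = (\<Prod>i<n. [:- lam i, 1:])"
    and A_diag: "\<forall>i<n. A $$ (i,i) \<notin> set_mset \<sigma>'"
    using S_graph_with_spectrum[OF assms(2) connected_graph_neighbour[OF assms(1,3)] lam] by blast
  obtain B where "B \<in> S_graph m H" and "char_poly B = char_poly A * (\<Prod>a\<in>#\<sigma>'. [:- a, 1:])"
    using S_graph_blowup_with_eigenvalues[OF A A_diag _ f] assms(7) H by auto
  moreover have "char_poly A * (\<Prod>a\<in>#\<sigma>'. [:- a, 1:]) = (\<Prod>a\<in>#\<sigma> + \<sigma>'. [:- a, 1:])"
    by (simp add: A_poly \<sigma> prod_unfold_prod_mset multiset.map_comp comp_def)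
  ultimately show ?thesis unfolding is_spectrum_def by auto
qed

end
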